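(* Let $A\in\mathbb{R}^{n\times n}$ be an irreducible singular lower Hessenberg M-matrix of the form $A=I-T$ with $T$ column stochastic (so that $\mathbf{e}^TA=\mathbf{0}^T$, where $\mathbf{e}$ is the vector of all ones). Let $A_{n-1}=A[1\colon n-1,1\colon n-1]$ be its leading principal $(n-1)\times(n-1)$ submatrix, let $L=\begin{bmatrix} I_{n-1} & \mathbf{0}\\ \mathbf{e}^T & 1\end{bmatrix}$, and define \[ M'_J=L^{-1}\begin{bmatrix}\operatorname{diag}(A_{n-1}) & 0\\ 0^T & 1\end{bmatrix},\quad M'_{GS}=L^{-1}\begin{bmatrix}\operatorname{tril}(A_{n-1}) & 0\\ 0^T & 1\end{bmatrix}, \] \[ M'_{AGS}=L^{-1}\begin{bmatrix}\operatorname{triu}(A_{n-1}) & 0\\ 0^T & 1\end{bmatrix},\quad M'_{S}=L^{-1}\begin{bmatrix}\mathcal{S}(A_{n-1}) & 0\\ 0^T & 1\end{bmatrix}, \] where $\mathcal{S}(A_{n-1})$ is the stair matrix of first order or of second order generated by $A_{n-1}$, and set $N'_X=M'_X-A$ for $X\in\{J,GS,AGS,S\}$. Then \[ \gamma({M'_J}^{-1}N'_J)\geq \gamma({M'_{GS}}^{-1}N'_{GS})\geq \gamma({M'_S}^{-1}N'_S)\geq \gamma({M'_{AGS}}^{-1}N'_{AGS}). \]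
   Context: For a square matrix $P$ with spectrum $\sigma(P)$, $\gamma(P)=\max\{|\lambda| : \lambda\in\sigma(P),\ \lambda\neq 1\}$. $A$ is lower Hessenberg if $A_{ij}=0$ whenever $j>i+1$. $\operatorname{diag}(B)$ is the diagonal part of $B$; $\operatorname{tril}(B)$ (resp. $\operatorname{triu}(B)$) is the lower (resp. upper) triangular part of $B$ including the diagonal. For a square matrix $B$ of size $m$, let $\operatorname{tridiag}(B)$ keep the subdiagonal, diagonal and superdiagonal entries of $B$ and zero the rest; the stair matrix of first order generated by $B$ is obtained from $\operatorname{tridiag}(B)$ by setting entries $(i,i-1)$ and $(i,i+1)$ (when they exist) to zero for every odd $i$, and the stair matrix of second order by doing so for every even $i$. *)

theory Defs
  imports "Jordan_Normal_Form.Spectral_Radius" "Jordan_Normal_Form.Gauss_Jordan_Elimination"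
begin

(* All matrices are JNF matrices with 0-based indices: entry (i,j) of the paper is A $$ (i-1,j-1). *)

(* gamma(P) = max{|lambda| : lambda in spectrum(P), lambda \<noteq> 1}, spectrum taken over the complex numbers.
   Convention: the max of the empty set is taken to be 0 (all moduli are \<ge> 0). *)
definition gamma :: "real mat \<Rightarrow> real" where
  "gamma P = Max (insert 0 (cmod ` (spectrum (map_mat complex_of_real P) - {1})))"

definition lower_hessenberg :: "'a::zero mat \<Rightarrow> bool" where
  "lower_hessenberg A \<longleftrightarrow> (\<forall>i<dim_row A. \<forall>j<dim_col A. j > i + 1 \<longrightarrow> A $$ (i,j) = 0)"

definition nonneg_mat :: "real mat \<Rightarrow> bool" where
  "nonneg_mat B \<longleftrightarrow> (\<forall>i<dim_row B. \<forall>j<dim_col B. B $$ (i,j) \<ge> 0)"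

definition column_stochastic :: "real mat \<Rightarrow> bool" where
  "column_stochastic T \<longleftrightarrow> nonneg_mat T \<and>
     (\<forall>j<dim_col T. (\<Sum>i<dim_row T. T $$ (i,j)) = 1)"

(* irreducible: not permutation-similar to a block triangular matrix, i.e. there is no
   nonempty proper subset I of the index set with A(i,j) = 0 for all i in I, j not in I *)
definition irreducible_mat :: "'a::zero mat \<Rightarrow> bool" where
  "irreducible_mat A \<longleftrightarrow> square_mat A \<and>
     \<not> (\<exists>I. I \<noteq> {} \<and> I \<subset> {0..<dim_row A} \<and>
            (\<forall>i\<in>I. \<forall>j\<in>{0..<dim_row A} - I. A $$ (i,j) = 0))"

definition M_matrix :: "real mat \<Rightarrow> bool" where
  "M_matrix A \<longleftrightarrow> (\<exists>s B. B \<in> carrier_mat (dim_row A) (dim_row A) \<and> nonneg_mat B \<and>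
      A = s \<cdot>\<^sub>m 1\<^sub>m (dim_row A) - B \<and> s \<ge> spectral_radius (map_mat complex_of_real B))"

definition diag_part :: "'a::zero mat \<Rightarrow> 'a mat" where
  "diag_part B = mat (dim_row B) (dim_col B) (\<lambda>(i,j). if i = j then B $$ (i,j) else 0)"

definition tril :: "'a::zero mat \<Rightarrow> 'a mat" where
  "tril B = mat (dim_row B) (dim_col B) (\<lambda>(i,j). if j \<le> i then B $$ (i,j) else 0)"

definition triu :: "'a::zero mat \<Rightarrow> 'a mat" where
  "triu B = mat (dim_row B) (dim_col B) (\<lambda>(i,j). if i \<le> j then B $$ (i,j) else 0)"

definition tridiag :: "'a::zero mat \<Rightarrow> 'a mat" where
  "tridiag B = mat (dim_row B) (dim_col B)
     (\<lambda>(i,j). if i \<le> j + 1 \<and> j \<le> i + 1 then B $$ (i,j) else 0)"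

(* stair matrix of first order: from tridiag(B), zero the entries (i,i-1), (i,i+1) for every
   odd (1-based) row i, i.e. every even 0-based row index *)
definition stair1 :: "'a::zero mat \<Rightarrow> 'a mat" where
  "stair1 B = mat (dim_row B) (dim_col B)
     (\<lambda>(i,j). if i \<noteq> j \<and> odd (i + 1) then 0 else tridiag B $$ (i,j))"

(* stair matrix of second order: same for every even (1-based) row i *)
definition stair2 :: "'a::zero mat \<Rightarrow> 'a mat" where
  "stair2 B = mat (dim_row B) (dim_col B)
     (\<lambda>(i,j). if i \<noteq> j \<and> even (i + 1) then 0 else tridiag B $$ (i,j))"

definition lead_sub :: "'a mat \<Rightarrow> 'a mat" where
  "lead_sub A = mat (dim_row A - 1) (dim_col A - 1) (\<lambda>(i,j). A $$ (i,j))"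

definition Lmat :: "nat \<Rightarrow> real mat" where
  "Lmat n = four_block_mat (1\<^sub>m (n-1)) (0\<^sub>m (n-1) 1) (mat 1 (n-1) (\<lambda>_. 1)) (1\<^sub>m 1)"

definition blk :: "nat \<Rightarrow> real mat \<Rightarrow> real mat" where
  "blk n D = four_block_mat D (0\<^sub>m (n-1) 1) (0\<^sub>m 1 (n-1)) (1\<^sub>m 1)"

definition mat_inv :: "real mat \<Rightarrow> real mat" where
  "mat_inv M = the (mat_inverse M)"

definition Mprime :: "(real mat \<Rightarrow> real mat) \<Rightarrow> real mat \<Rightarrow> real mat" where
  "Mprime X A = mat_inv (Lmat (dim_row A)) * blk (dim_row A) (X (lead_sub A))"

definition iter_mat :: "(real mat \<Rightarrow> real mat) \<Rightarrow> real mat \<Rightarrow> real mat" where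
  "iter_mat X A = mat_inv (Mprime X A) * (Mprime X A - A)"

end

(* Write B for the leading block A_{n-1}.  Since e^T A = 0, the last row of L A vanishes, so the
   eigenvalues of M'_X^{-1} N'_X other than 1 are those of the splitting B = X(B) - (X(B) - B).
   Each X(B) is a monotone Z-matrix (it can be solved by substitution), so these splittings are
   regular, and for a regular splitting B = M - N the eigenvalues of M^{-1} N lie in the open disc
   of radius alpha iff alpha M - N maps some positive vector to a positive vector.  For the four
   splittings the matrices alpha M - N differ only in which entries of B carry the factor alpha;
   as B is lower Hessenberg, a diagonal scaling by powers of 1/alpha transports such a positive
   vector from J to GS, from GS to either stair splitting and from there to AGS.  Irreducibility
   of A keeps gamma of the Jacobi splitting below 1, which starts the chain (the scaling needs
   alpha < 1). *)

theory Submission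
  imports Defs
begin

definition nonneg_vec :: "real vec \<Rightarrow> bool" where
  "nonneg_vec v \<longleftrightarrow> (\<forall>i<dim_vec v. 0 \<le> v $ i)"

definition pos_vec :: "real vec \<Rightarrow> bool" where
  "pos_vec v \<longleftrightarrow> (\<forall>i<dim_vec v. 0 < v $ i)"

definition Z_mat :: "real mat \<Rightarrow> bool" where
  "Z_mat M \<longleftrightarrow> (\<forall>i<dim_row M. \<forall>j<dim_col M. i \<noteq> j \<longrightarrow> M $$ (i,j) \<le> 0)"

definition monotone_mat :: "real mat \<Rightarrow> bool" where
  "monotone_mat M \<longleftrightarrow> (\<forall>v \<in> carrier_vec (dim_col M). nonneg_vec (M *\<^sub>v v) \<longrightarrow> nonneg_vec v)"

definition semipositive :: "real mat \<Rightarrow> bool" where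
  "semipositive C \<longleftrightarrow> (\<exists>x \<in> carrier_vec (dim_col C). pos_vec x \<and> pos_vec (C *\<^sub>v x))"

definition pencil_eigenvalue :: "real mat \<Rightarrow> real mat \<Rightarrow> complex \<Rightarrow> bool" where
  "pencil_eigenvalue M N \<mu> \<longleftrightarrow> (\<exists>v \<in> carrier_vec (dim_col M). v \<noteq> 0\<^sub>v (dim_col M) \<and>
     map_mat of_real N *\<^sub>v v = \<mu> \<cdot>\<^sub>v (map_mat of_real M *\<^sub>v v))"

lemma mult_mat_vec_sum:
  assumes "A \<in> carrier_mat nr n" and "v \<in> carrier_vec n" and "i < nr"
  shows "(A *\<^sub>v v) $ i = (\<Sum>j<n. A $$ (i,j) * v $ j)"
  using assms by (simp add: scalar_prod_def atLeast0LessThan)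

lemma sum_split_diag:
  fixes f :: "nat \<Rightarrow> 'a::comm_monoid_add"
  assumes "k < m"
  shows "(\<Sum>j<m. f j) = f k + (\<Sum>j\<in>{..<m} - {k}. f j)"
  using assms by (simp add: sum.remove)

lemma smult_mult_mat_vec:
  fixes A :: "'a::comm_ring_1 mat"
  assumes "A \<in> carrier_mat nr nc" and "v \<in> carrier_vec nc"
  shows "(a \<cdot>\<^sub>m A) *\<^sub>v v = a \<cdot>\<^sub>v (A *\<^sub>v v)"
  using assms by (intro eq_vecI) (auto simp: scalar_prod_def sum_distrib_left algebra_simps)

lemma smult_minus_mult_mat_vec:
  fixes M N :: "'a::comm_ring_1 mat"
  assumes "M \<in> carrier_mat nr nc" and "N \<in> carrier_mat nr nc" and "u \<in> carrier_vec nc"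
  shows "(a \<cdot>\<^sub>m M - N) *\<^sub>v u = a \<cdot>\<^sub>v (M *\<^sub>v u) - N *\<^sub>v u"
  using assms
  by (intro eq_vecI) (auto simp: scalar_prod_def sum_distrib_left sum_subtractf algebra_simps)

lemma smult_pow_mat:
  fixes A :: "'a::comm_ring_1 mat"
  assumes A: "A \<in> carrier_mat n n"
  shows "(a \<cdot>\<^sub>m A) ^\<^sub>m k = a ^ k \<cdot>\<^sub>m A ^\<^sub>m k"
proof (induction k)
  case 0
  then show ?case using A by (intro eq_matI) auto
next
  case (Suc k)
  have "(a \<cdot>\<^sub>m A) ^\<^sub>m Suc k = (a ^ k \<cdot>\<^sub>m A ^\<^sub>m k) * (a \<cdot>\<^sub>m A)" using Suc by simp
  also have "\<dots> = a ^ k \<cdot>\<^sub>m (A ^\<^sub>m k * (a \<cdot>\<^sub>m A))"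
    using A by (intro mult_smult_assoc_mat) auto
  also have "A ^\<^sub>m k * (a \<cdot>\<^sub>m A) = a \<cdot>\<^sub>m (A ^\<^sub>m k * A)"
    using A by (intro mult_smult_distrib) auto
  finally have e: "(a \<cdot>\<^sub>m A) ^\<^sub>m Suc k = a ^ k \<cdot>\<^sub>m (a \<cdot>\<^sub>m (A ^\<^sub>m k * A))" .
  show ?case unfolding e by (intro eq_matI) (auto simp: mult.commute mult.left_commute)
qed

lemma pow_mat_Suc_left:
  assumes A: "A \<in> carrier_mat n n"
  shows "A ^\<^sub>m Suc k = A * A ^\<^sub>m k"
proof (induction k)
  case 0
  then show ?case using A by simp
next
  case (Suc k)
  have "A ^\<^sub>m Suc (Suc k) = (A * A ^\<^sub>m k) * A" using Suc by simp
  also have "\<dots> = A * A ^\<^sub>m Suc k" using A by (simp add: assoc_mult_mat[of _ n n _ n _ n])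
  finally show ?case .
qed

lemma mat_inverse_det_nonzero:
  fixes M :: "'a::field mat"
  assumes M: "M \<in> carrier_mat m m" and "det M \<noteq> 0"
  obtains W where "mat_inverse M = Some W" "W \<in> carrier_mat m m" "M * W = 1\<^sub>m m" "W * M = 1\<^sub>m m"
proof (cases "mat_inverse M")
  case None
  have "M \<in> Units (ring_mat TYPE('a) m ())" by (rule det_non_zero_imp_unit[OF M \<open>det M \<noteq> 0\<close>])
  moreover have "M \<notin> Units (ring_mat TYPE('a) m ())" by (rule mat_inverse(1)[OF M None])
  ultimately show ?thesis by contradiction
next
  case (Some W)
  then show ?thesis using mat_inverse(2)[OF M Some] that by blast
qed

lemma of_real_mat_inverse:
  fixes A B :: "real mat"
  assumes "A \<in> carrier_mat n n" and "B \<in> carrier_mat n n" and "A * B = 1\<^sub>m n"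
  shows "map_mat complex_of_real A * map_mat complex_of_real B = 1\<^sub>m n"
  using assms of_real_hom.mat_hom_mult[of A n n B n] of_real_hom.mat_hom_one by metis

section \<open>Regular splittings and semipositivity\<close>

lemma Z_mat_semipositive_null:
  assumes C: "C \<in> carrier_mat m m" and Z: "Z_mat C" and "semipositive C"
    and w: "w \<in> carrier_vec m" "nonneg_vec w" and Cw: "\<forall>i<m. (C *\<^sub>v w) $ i \<le> 0"
  shows "w = 0\<^sub>v m"
proof (rule ccontr)
  assume "w \<noteq> 0\<^sub>v m"
  then obtain j0 where j0: "j0 < m" "w $ j0 \<noteq> 0"
    using w(1) by (metis carrier_vecD eq_vecI index_zero_vec)
  obtain x where x: "x \<in> carrier_vec m" "pos_vec x" "pos_vec (C *\<^sub>v x)"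
    using \<open>semipositive C\<close> C unfolding semipositive_def by auto
  have xpos: "0 < x $ j" and wnn: "0 \<le> w $ j" if "j < m" for j
    using that x w unfolding pos_vec_def nonneg_vec_def by auto
  define t where "t = Max ((\<lambda>j. w $ j / x $ j) ` {..<m})"
  have "t \<in> (\<lambda>j. w $ j / x $ j) ` {..<m}"
    unfolding t_def using j0 by (intro Max_in) auto
  then obtain k where k: "k < m" "t = w $ k / x $ k" by auto
  have wt: "w $ j \<le> t * x $ j" if "j < m" for j
  proof -
    have "w $ j / x $ j \<le> t" unfolding t_def using that by auto
    then show ?thesis using xpos[OF that] by (simp add: pos_divide_le_eq)
  qed
  have "0 < w $ j0 / x $ j0" using j0 xpos wnn by (simp add: order_le_neq_trans)
  also have "\<dots> \<le> t" unfolding t_def using j0 by auto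
  finally have t: "0 < t" .
  \<comment> \<open>\<open>t x - w\<close> is nonnegative and vanishes at \<open>k\<close>, so row \<open>k\<close> of \<open>C\<close> maps it
    to a nonpositive number\<close>

  have "(\<Sum>j<m. C $$ (k,j) * (t * x $ j - w $ j))
      = t * (C *\<^sub>v x) $ k - (C *\<^sub>v w) $ k"
    unfolding mult_mat_vec_sum[OF C x(1) k(1)] mult_mat_vec_sum[OF C w(1) k(1)]
    by (simp add: sum_distrib_left sum_subtractf algebra_simps)
  also have "\<dots> > 0"
    using t x(3) Cw k(1) C unfolding pos_vec_def
    by (smt (verit, best) carrier_matD(1) dim_mult_mat_vec mult_pos_pos)
  finally have pos: "(\<Sum>j<m. C $$ (k,j) * (t * x $ j - w $ j)) > 0" .
  have zk: "t * x $ k - w $ k = 0" using k xpos[of k] by simp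
  have "(\<Sum>j<m. C $$ (k,j) * (t * x $ j - w $ j)) \<le> 0"
  proof (rule sum_nonpos)
    fix j assume "j \<in> {..<m}"
    then show "C $$ (k,j) * (t * x $ j - w $ j) \<le> 0"
      using Z C k(1) wt[of j] zk by (cases "j = k") (auto simp: Z_mat_def mult_nonpos_nonneg)
  qed
  with pos show False by simp
qed

lemma pencil_eigenvector_norm_ineq:
  fixes M N :: "real mat" and v :: "complex vec"
  assumes M: "M \<in> carrier_mat m m" and N: "N \<in> carrier_mat m m"
    and Z: "Z_mat M" and Nnn: "nonneg_mat N" and v: "v \<in> carrier_vec m"
    and eig: "map_mat of_real N *\<^sub>v v = \<mu> \<cdot>\<^sub>v (map_mat of_real M *\<^sub>v v)" and k: "k < m"
  shows "cmod \<mu> * (M *\<^sub>v vec m (\<lambda>j. cmod (v $ j))) $ k \<le> (N *\<^sub>v vec m (\<lambda>j. cmod (v $ j))) $ k"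
proof -
  define w where "w = vec m (\<lambda>j. cmod (v $ j))"
  have w: "w \<in> carrier_vec m" by (simp add: w_def)
  let ?R = "{..<m} - {k}"
  have cM: "map_mat complex_of_real M \<in> carrier_mat m m" and cN: "map_mat complex_of_real N \<in> carrier_mat m m"
    using M N by auto
  have Mv: "(map_mat of_real M *\<^sub>v v) $ k
      = of_real (M $$ (k,k)) * v $ k + (\<Sum>j\<in>?R. of_real (M $$ (k,j)) * v $ j)"
    using mult_mat_vec_sum[OF cM v k] sum_split_diag[OF k] M k by simp
  have "(M *\<^sub>v w) $ k = M $$ (k,k) * cmod (v $ k) + (\<Sum>j\<in>?R. M $$ (k,j) * cmod (v $ j))"
    using mult_mat_vec_sum[OF M w k] sum_split_diag[OF k] by (simp add: w_def)
  also have "\<dots> \<le> cmod (of_real (M $$ (k,k)) * v $ k) - (\<Sum>j\<in>?R. cmod (of_real (M $$ (k,j)) * v $ j))"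
  proof -
    have "M $$ (k,j) * cmod (v $ j) = - cmod (of_real (M $$ (k,j)) * v $ j)" if "j \<in> ?R" for j
      using Z M k that unfolding Z_mat_def by (auto simp: norm_mult)
    then show ?thesis
      by (simp add: sum_negf norm_mult abs_ge_self mult_right_mono)
  qed
  also have "\<dots> \<le> cmod ((map_mat of_real M *\<^sub>v v) $ k)"
    unfolding Mv using norm_sum[of "\<lambda>j. of_real (M $$ (k,j)) * v $ j" ?R]
      norm_diff_ineq[of "of_real (M $$ (k,k)) * v $ k" "\<Sum>j\<in>?R. of_real (M $$ (k,j)) * v $ j"]
    by simp
  finally have Mw: "(M *\<^sub>v w) $ k \<le> cmod ((map_mat of_real M *\<^sub>v v) $ k)" .
  have "cmod ((map_mat of_real N *\<^sub>v v) $ k) = cmod (\<Sum>j<m. of_real (N $$ (k,j)) * v $ j)"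
    using mult_mat_vec_sum[OF cN v k] N k by simp
  also have "\<dots> \<le> (\<Sum>j<m. N $$ (k,j) * cmod (v $ j))"
    using norm_sum[of "\<lambda>j. of_real (N $$ (k,j)) * v $ j" "{..<m}"] Nnn N k
    by (simp add: norm_mult nonneg_mat_def)
  also have "\<dots> = (N *\<^sub>v w) $ k"
    using mult_mat_vec_sum[OF N w k] by (simp add: w_def)
  finally have Nw: "cmod ((map_mat of_real N *\<^sub>v v) $ k) \<le> (N *\<^sub>v w) $ k" .
  have "cmod \<mu> * (M *\<^sub>v w) $ k \<le> cmod \<mu> * cmod ((map_mat of_real M *\<^sub>v v) $ k)"
    using Mw by (simp add: mult_left_mono)
  also have "\<dots> = cmod ((map_mat of_real N *\<^sub>v v) $ k)"
    using arg_cong[OF eig, of "\<lambda>u. u $ k"] M k by (simp add: norm_mult)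
  finally show ?thesis using Nw unfolding w_def by simp
qed

lemma semipositive_imp_pencil_eigenvalue_lt:
  fixes M N :: "real mat"
  assumes M: "M \<in> carrier_mat m m" and N: "N \<in> carrier_mat m m"
    and Z: "Z_mat M" and Nnn: "nonneg_mat N" and \<alpha>: "0 < \<alpha>"
    and semi: "semipositive (\<alpha> \<cdot>\<^sub>m M - N)" and eig: "pencil_eigenvalue M N \<mu>"
  shows "cmod \<mu> < \<alpha>"
proof (rule ccontr)
  assume "\<not> cmod \<mu> < \<alpha>"
  then have \<alpha>\<mu>: "\<alpha> \<le> cmod \<mu>" by simp
  obtain v where v: "v \<in> carrier_vec m" "v \<noteq> 0\<^sub>v m"
    and Nv: "map_mat of_real N *\<^sub>v v = \<mu> \<cdot>\<^sub>v (map_mat of_real M *\<^sub>v v)"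
    using eig M unfolding pencil_eigenvalue_def by auto
  define w where "w = vec m (\<lambda>j. cmod (v $ j))"
  define C where "C = cmod \<mu> \<cdot>\<^sub>m M - N"
  have C: "C \<in> carrier_mat m m" unfolding C_def using N by (rule minus_carrier_mat)
  have w: "w \<in> carrier_vec m" "nonneg_vec w" by (auto simp: w_def nonneg_vec_def)
  have C_mult: "(C *\<^sub>v u) $ i = cmod \<mu> * (M *\<^sub>v u) $ i - (N *\<^sub>v u) $ i"
    and semi_mult: "((\<alpha> \<cdot>\<^sub>m M - N) *\<^sub>v u) $ i = \<alpha> * (M *\<^sub>v u) $ i - (N *\<^sub>v u) $ i"
    if "u \<in> carrier_vec m" "i < m" for u i
    using that M N unfolding C_def by (simp_all add: smult_minus_mult_mat_vec)
  have "Z_mat C"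
    using Z Nnn M N \<alpha> \<alpha>\<mu> unfolding Z_mat_def nonneg_mat_def C_def
    by (auto intro: order_trans[OF mult_nonneg_nonpos])
  moreover have "semipositive C"
  proof -
    obtain x where x: "x \<in> carrier_vec m" "pos_vec x" "pos_vec ((\<alpha> \<cdot>\<^sub>m M - N) *\<^sub>v x)"
      using semi N unfolding semipositive_def by auto
    have "0 < (C *\<^sub>v x) $ i" if i: "i < m" for i
    proof -
      have "0 \<le> (N *\<^sub>v x) $ i"
        using mult_mat_vec_sum[OF N x(1) i] Nnn N x i
        by (auto simp: nonneg_mat_def pos_vec_def intro!: sum_nonneg mult_nonneg_nonneg[OF _ less_imp_le])
      moreover have "0 < ((\<alpha> \<cdot>\<^sub>m M - N) *\<^sub>v x) $ i"
        using x(3) i N unfolding pos_vec_def by simp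
      then have "0 < \<alpha> * (M *\<^sub>v x) $ i - (N *\<^sub>v x) $ i"
        unfolding semi_mult[OF x(1) i] .
      ultimately have "0 \<le> (M *\<^sub>v x) $ i" using \<alpha> by (smt (verit) mult_nonpos_nonneg mult_nonneg_nonpos)
      then have "\<alpha> * (M *\<^sub>v x) $ i \<le> cmod \<mu> * (M *\<^sub>v x) $ i" using \<alpha>\<mu> by (simp add: mult_right_mono)
      then show ?thesis using \<open>0 < \<alpha> * _ - _\<close> C_mult[OF x(1) i] by simp
    qed
    then show ?thesis using x C unfolding semipositive_def pos_vec_def by auto
  qed
  moreover have "\<forall>i<m. (C *\<^sub>v w) $ i \<le> 0"
    using pencil_eigenvector_norm_ineq[OF M N Z Nnn v(1) Nv] C_mult[OF w(1)] unfolding w_def by simp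
  ultimately have w0: "w = 0\<^sub>v m" using Z_mat_semipositive_null[OF C] w by blast
  have "v $ i = 0" if "i < m" for i
  proof -
    have "w $ i = 0" using w0 that by simp
    then show ?thesis using that by (simp add: w_def)
  qed
  then have "v = 0\<^sub>v m" using v(1) by (intro eq_vecI) auto
  with v(2) show False ..
qed

lemma monotone_mat_det_nonzero:
  assumes M: "M \<in> carrier_mat m m" and mono: "monotone_mat M"
  shows "det M \<noteq> 0"
proof
  assume "det M = 0"
  then obtain v where v: "v \<in> carrier_vec m" "v \<noteq> 0\<^sub>v m" "M *\<^sub>v v = 0\<^sub>v m"
    using det_0_iff_vec_prod_zero_field[OF M] by blast
  have "M *\<^sub>v (- v) = - (M *\<^sub>v v)"
    using M v(1) by (intro eq_vecI) (auto simp: scalar_prod_def sum_negf)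
  then have "M *\<^sub>v (- v) = 0\<^sub>v m" using v(3) by simp
  then have "nonneg_vec (M *\<^sub>v v)" and "nonneg_vec (M *\<^sub>v (- v))"
    using v(3) by (simp_all add: nonneg_vec_def)
  then have "nonneg_vec v" and "nonneg_vec (- v)"
    using mono M v(1) unfolding monotone_mat_def by auto
  then have "v = 0\<^sub>v m" using v(1) unfolding nonneg_vec_def by (intro eq_vecI) force+
  with v(2) show False ..
qed

lemma monotone_mat_mult_nonneg:
  assumes M: "M \<in> carrier_mat m m" and H: "H \<in> carrier_mat m nc" and "monotone_mat M"
    and "nonneg_mat (M * H)"
  shows "nonneg_mat H"
  unfolding nonneg_mat_def
proof (intro allI impI)
  fix i j assume i: "i < dim_row H" and j: "j < dim_col H"
  have "nonneg_vec (M *\<^sub>v col H j)"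
    using \<open>nonneg_mat (M * H)\<close> M H j unfolding nonneg_mat_def nonneg_vec_def by auto
  then have "nonneg_vec (col H j)"
    using \<open>monotone_mat M\<close> M H unfolding monotone_mat_def by auto
  then show "0 \<le> H $$ (i,j)" using i j unfolding nonneg_vec_def by auto
qed

lemma monotone_Z_mat_pos_solution:
  assumes M: "M \<in> carrier_mat m m" and "monotone_mat M" and Z: "Z_mat M"
  obtains w where "w \<in> carrier_vec m" "pos_vec w" "M *\<^sub>v w = vec m (\<lambda>_. 1)"
proof -
  obtain W where W: "W \<in> carrier_mat m m" "M * W = 1\<^sub>m m"
    using mat_inverse_det_nonzero[OF M monotone_mat_det_nonzero[OF M \<open>monotone_mat M\<close>]] by metis
  define w where "w = W *\<^sub>v vec m (\<lambda>_. 1)"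
  have w: "w \<in> carrier_vec m" using W by (simp add: w_def)
  have Mw: "M *\<^sub>v w = vec m (\<lambda>_. 1)"
    unfolding w_def using M W by (simp flip: assoc_mult_mat_vec)
  then have "nonneg_vec (M *\<^sub>v w)" by (simp add: nonneg_vec_def)
  then have wnn: "nonneg_vec w" using \<open>monotone_mat M\<close> M w unfolding monotone_mat_def by auto
  have "0 < w $ i" if i: "i < m" for i
  proof -
    have "1 = (\<Sum>j<m. M $$ (i,j) * w $ j)" using mult_mat_vec_sum[OF M w i] Mw i by simp
    also have "\<dots> = M $$ (i,i) * w $ i + (\<Sum>j\<in>{..<m} - {i}. M $$ (i,j) * w $ j)"
      by (rule sum_split_diag[OF i])
    also have "(\<Sum>j\<in>{..<m} - {i}. M $$ (i,j) * w $ j) \<le> 0"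
      using Z M wnn w i unfolding Z_mat_def nonneg_vec_def by (intro sum_nonpos) (auto intro: mult_nonpos_nonneg)
    finally have "w $ i \<noteq> 0" by auto
    then show ?thesis using wnn w i unfolding nonneg_vec_def by force
  qed
  then show ?thesis using that w Mw unfolding pos_vec_def by auto
qed

lemma monotone_mat_by_rank:
  fixes M :: "real mat" and rk :: "nat \<Rightarrow> nat"
  assumes M: "M \<in> carrier_mat m m" and Z: "Z_mat M" and diag: "\<And>i. i < m \<Longrightarrow> 0 < M $$ (i,i)"
    and rank: "\<And>i j. i < m \<Longrightarrow> j < m \<Longrightarrow> i \<noteq> j \<Longrightarrow> M $$ (i,j) \<noteq> 0 \<Longrightarrow> rk j < rk i"
  shows "monotone_mat M"
  unfolding monotone_mat_def
proof (intro ballI impI)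
  fix v :: "real vec" assume v: "v \<in> carrier_vec (dim_col M)" and Mv: "nonneg_vec (M *\<^sub>v v)"
  have "0 \<le> v $ i" if "i < m" for i
    using that
  proof (induction i rule: measure_induct_rule[of rk])
    case (less i)
    have "0 \<le> (M *\<^sub>v v) $ i" using Mv M less.prems unfolding nonneg_vec_def by simp
    also have "\<dots> = M $$ (i,i) * v $ i + (\<Sum>j\<in>{..<m} - {i}. M $$ (i,j) * v $ j)"
      using mult_mat_vec_sum[OF M _ less.prems] v M sum_split_diag[OF less.prems] by simp
    also have "(\<Sum>j\<in>{..<m} - {i}. M $$ (i,j) * v $ j) \<le> 0"
    proof (rule sum_nonpos)
      fix j assume j: "j \<in> {..<m} - {i}"
      show "M $$ (i,j) * v $ j \<le> 0"
      proof (cases "M $$ (i,j) = 0")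
        case False
        then have "0 \<le> v $ j" using less.IH rank less.prems j by auto
        moreover have "M $$ (i,j) \<le> 0" using Z M less.prems j unfolding Z_mat_def by auto
        ultimately show ?thesis by (simp add: mult_nonpos_nonneg)
      qed simp
    qed
    finally show ?case using diag[OF less.prems] by (simp add: zero_le_mult_iff)
  qed
  then show "nonneg_vec v" using v M unfolding nonneg_vec_def by simp
qed

lemma power_entries_bound:
  fixes H :: "real mat"
  assumes H: "H \<in> carrier_mat m m" and \<rho>: "spectral_radius (map_mat of_real H) < \<beta>"
  obtains c where "\<And>k i j. i < m \<Longrightarrow> j < m \<Longrightarrow> \<bar>(H ^\<^sub>m k) $$ (i,j)\<bar> \<le> c * \<beta> ^ k"
proof (cases "m = 0")
  case True
  then show ?thesis using that by auto
next
  case False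
  let ?H = "map_mat complex_of_real H"
  have cH: "?H \<in> carrier_mat m m" using H by simp
  have "0 \<le> spectral_radius ?H" using spectral_radius_mem_max(1)[OF cH] False by auto
  then have \<beta>: "0 < \<beta>" using \<rho> by simp
  define Q where "Q = complex_of_real (1 / \<beta>) \<cdot>\<^sub>m ?H"
  have Q: "Q \<in> carrier_mat m m" using H by (simp add: Q_def)
  have "spectral_radius Q < 1"
  proof -
    obtain \<nu> where \<nu>: "\<nu> \<in> spectrum Q" "spectral_radius Q = cmod \<nu>"
      using spectral_radius_mem_max(1)[OF Q] False by auto
    then obtain u where u: "u \<in> carrier_vec m" "u \<noteq> 0\<^sub>v m" "Q *\<^sub>v u = \<nu> \<cdot>\<^sub>v u"
      using Q unfolding spectrum_def eigenvalue_def eigenvector_def by auto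
    have "?H = complex_of_real \<beta> \<cdot>\<^sub>m Q" using \<beta> by (auto simp: Q_def)
    then have "?H *\<^sub>v u = (complex_of_real \<beta> * \<nu>) \<cdot>\<^sub>v u"
      using Q u by (simp add: smult_mult_mat_vec smult_smult_assoc)
    then have "complex_of_real \<beta> * \<nu> \<in> spectrum ?H"
      using cH u unfolding spectrum_def eigenvalue_def eigenvector_def by auto
    then have "\<beta> * cmod \<nu> \<le> spectral_radius ?H"
      using spectral_radius_mem_max(2)[OF cH] False \<beta> by (force simp: norm_mult)
    then show ?thesis using \<nu>(2) \<rho> \<beta> by (smt (verit) mult_le_cancel_left1)
  qed
  then obtain c where c: "\<And>k. norm_bound (Q ^\<^sub>m k) c"
    using spectral_radius_jnf_norm_bound_less_1_upper_triangular[OF Q] by blast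
  have "\<bar>(H ^\<^sub>m k) $$ (i,j)\<bar> \<le> c * \<beta> ^ k" if "i < m" "j < m" for k i j
  proof -
    have "Q ^\<^sub>m k = complex_of_real (1 / \<beta>) ^ k \<cdot>\<^sub>m map_mat of_real (H ^\<^sub>m k)"
      unfolding Q_def smult_pow_mat[OF cH] of_real_hom.mat_hom_pow[OF H] ..
    then have "(Q ^\<^sub>m k) $$ (i,j) = of_real ((1 / \<beta>) ^ k * (H ^\<^sub>m k) $$ (i,j))"
      using that H by simp
    moreover have "cmod ((Q ^\<^sub>m k) $$ (i,j)) \<le> c"
      using c[of k] that Q unfolding norm_bound_def by simp
    ultimately have "(1 / \<beta>) ^ k * \<bar>(H ^\<^sub>m k) $$ (i,j)\<bar> \<le> c"
      using \<beta> by (simp add: norm_mult norm_power norm_divide)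
    then show ?thesis using \<beta> by (simp add: field_simps)
  qed
  then show ?thesis using that by blast
qed

lemma weighted_sum_telescope:
  fixes Y :: "nat \<Rightarrow> real"
  assumes "\<alpha> * a = 1"
  shows "\<alpha> * (\<Sum>k<K. a ^ k * Y k) - (\<Sum>k<K. a ^ k * Y (Suc k)) = \<alpha> * (Y 0 - a ^ K * Y K)"
proof (induction K)
  case (Suc K)
  have "a ^ K * Y (Suc K) = \<alpha> * (a ^ Suc K * Y (Suc K))"
    using assms by (simp add: algebra_simps)
  with Suc show ?case by (simp add: algebra_simps)
qed simp

lemma truncated_neumann_series:
  fixes H :: "real mat"
  assumes H: "H \<in> carrier_mat m m" and Hnn: "nonneg_mat H"
    and bound: "\<And>k i j. i < m \<Longrightarrow> j < m \<Longrightarrow> \<bar>(H ^\<^sub>m k) $$ (i,j)\<bar> \<le> c * \<beta> ^ k"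
    and \<beta>: "0 < \<beta>" "\<beta> < \<alpha>" and w: "w \<in> carrier_vec m" "nonneg_vec w" and \<epsilon>: "0 < \<epsilon>"
  obtains x where "x \<in> carrier_vec m" "\<forall>i<m. w $ i \<le> x $ i"
    "\<forall>i<m. \<bar>(\<alpha> \<cdot>\<^sub>v x - H *\<^sub>v x) $ i - \<alpha> * w $ i\<bar> \<le> \<epsilon>"
proof -
  define y where "y k = (H ^\<^sub>m k) *\<^sub>v w" for k
  have y: "y k \<in> carrier_vec m" for k
    unfolding y_def using pow_carrier_mat[OF H] w(1) by (rule mult_mat_vec_carrier)
  have y0: "y 0 = w" using H w by (simp add: y_def)
  have ySuc: "y (Suc k) = H *\<^sub>v y k" for k
    unfolding y_def pow_mat_Suc_left[OF H] by (rule assoc_mult_mat_vec[OF H pow_carrier_mat[OF H] w(1)])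
  have ynn: "0 \<le> y k $ i" if "i < m" for k i
    using that
  proof (induction k arbitrary: i)
    case 0
    then show ?case using w y0 by (simp add: nonneg_vec_def)
  next
    case (Suc k)
    then show ?case unfolding ySuc mult_mat_vec_sum[OF H y Suc.prems] using H Hnn
      by (auto intro!: sum_nonneg simp: nonneg_mat_def)
  qed
  define Sw where "Sw = (\<Sum>j<m. w $ j)"
  have ybound: "\<bar>y k $ i\<bar> \<le> \<bar>c\<bar> * \<beta> ^ k * Sw" if i: "i < m" for k i
  proof -
    have "\<bar>y k $ i\<bar> \<le> (\<Sum>j<m. \<bar>(H ^\<^sub>m k) $$ (i,j)\<bar> * w $ j)"
      unfolding y_def mult_mat_vec_sum[OF pow_carrier_mat[OF H] w(1) i]
      using w unfolding nonneg_vec_def by (auto intro: order_trans[OF sum_abs] simp: abs_mult)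
    also have "\<dots> \<le> (\<Sum>j<m. \<bar>c\<bar> * \<beta> ^ k * w $ j)"
      using bound[OF i] w \<beta>(1) unfolding nonneg_vec_def
      by (intro sum_mono mult_right_mono) (auto intro: order_trans[OF _ mult_right_mono[OF abs_ge_self]])
    finally show ?thesis by (simp add: Sw_def sum_distrib_left)
  qed
  define a where "a = 1 / \<alpha>"
  have a: "\<alpha> * a = 1" "0 < a" using \<beta> by (auto simp: a_def)
  have "(\<lambda>K. \<alpha> * \<bar>c\<bar> * Sw * (\<beta> / \<alpha>) ^ K) \<longlonglongrightarrow> 0"
    using \<beta> by (intro tendsto_mult_right_zero LIMSEQ_power_zero) auto
  from order_tendstoD(2)[OF this \<epsilon>] obtain K0
    where K0: "\<And>K. K \<ge> K0 \<Longrightarrow> \<alpha> * \<bar>c\<bar> * Sw * (\<beta> / \<alpha>) ^ K < \<epsilon>"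
    unfolding eventually_sequentially by blast
  define K where "K = Suc K0"
  define x where "x = vec m (\<lambda>i. \<Sum>k<K. a ^ k * y k $ i)"
  have x: "x \<in> carrier_vec m" by (simp add: x_def)
  have "w $ i \<le> x $ i" if "i < m" for i
    using that y0 a(2) ynn member_le_sum[of 0 "{..<K}" "\<lambda>k. a ^ k * y k $ i"]
    by (auto simp: x_def K_def)
  moreover have "\<bar>(\<alpha> \<cdot>\<^sub>v x - H *\<^sub>v x) $ i - \<alpha> * w $ i\<bar> \<le> \<epsilon>" if i: "i < m" for i
  proof -
    have "(H *\<^sub>v x) $ i = (\<Sum>k<K. a ^ k * y (Suc k) $ i)"
      unfolding mult_mat_vec_sum[OF H x i] ySuc mult_mat_vec_sum[OF H y i]
      by (simp add: x_def sum_distrib_left sum.swap[of _ "{..<m}"] mult.left_commute)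
    then have "(\<alpha> \<cdot>\<^sub>v x - H *\<^sub>v x) $ i - \<alpha> * w $ i = - \<alpha> * (a ^ K * y K $ i)"
      using weighted_sum_telescope[OF a(1), where K=K and Y="\<lambda>k. y k $ i"] x H i y0
      by (simp add: x_def algebra_simps)
    also have "\<bar>\<dots>\<bar> \<le> \<alpha> * (a ^ K * (\<bar>c\<bar> * \<beta> ^ K * Sw))"
      using ybound[OF i, of K] a \<beta> by (simp add: abs_mult)
    also have "\<dots> = \<alpha> * \<bar>c\<bar> * Sw * (\<beta> / \<alpha>) ^ K" by (simp add: a_def power_divide)
    also have "\<dots> < \<epsilon>" by (rule K0) (simp add: K_def)
    finally show ?thesis by simp
  qed
  ultimately show ?thesis using that x by blast
qed

lemma spectral_radius_lt_if_pencil_bound: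
  fixes M H :: "real mat"
  assumes M: "M \<in> carrier_mat m m" and H: "H \<in> carrier_mat m m" and "0 < m"
    and bound: "\<And>\<mu>. pencil_eigenvalue M (M * H) \<mu> \<Longrightarrow> cmod \<mu> < \<alpha>"
  shows "spectral_radius (map_mat of_real H) < \<alpha>"
proof -
  let ?c = "map_mat complex_of_real"
  have cH: "?c H \<in> carrier_mat m m" using H by simp
  obtain \<mu> where \<mu>: "\<mu> \<in> spectrum (?c H)" "spectral_radius (?c H) = cmod \<mu>"
    using spectral_radius_mem_max(1)[OF cH \<open>0 < m\<close>] by auto
  then obtain u where u: "u \<in> carrier_vec m" "u \<noteq> 0\<^sub>v m" "?c H *\<^sub>v u = \<mu> \<cdot>\<^sub>v u"
    using cH unfolding spectrum_def eigenvalue_def eigenvector_def by auto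
  have "?c (M * H) *\<^sub>v u = ?c M *\<^sub>v (?c H *\<^sub>v u)"
    using M H u(1) by (simp add: of_real_hom.mat_hom_mult)
  also have "\<dots> = \<mu> \<cdot>\<^sub>v (?c M *\<^sub>v u)" using M u(1) unfolding u(3) by (simp add: mult_mat_vec)
  finally have "pencil_eigenvalue M (M * H) \<mu>"
    using M u unfolding pencil_eigenvalue_def by auto
  then show ?thesis using bound \<mu>(2) by simp
qed

lemma mult_mat_vec_near_pos:
  fixes M :: "real mat"
  assumes M: "M \<in> carrier_mat m m" and w: "w \<in> carrier_vec m" and Mw: "M *\<^sub>v w = vec m (\<lambda>_. 1)"
    and z: "z \<in> carrier_vec m" and \<alpha>: "0 < \<alpha>"
    and near: "\<And>j. j < m \<Longrightarrow> \<bar>z $ j - \<alpha> * w $ j\<bar> \<le> \<alpha> / ((\<Sum>i<m. \<Sum>j<m. \<bar>M $$ (i,j)\<bar>) + 1)"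
    and i: "i < m"
  shows "0 < (M *\<^sub>v z) $ i"
proof -
  define SM where "SM = (\<Sum>i<m. \<Sum>j<m. \<bar>M $$ (i,j)\<bar>)"
  have SM: "0 \<le> SM" by (simp add: SM_def sum_nonneg)
  have "(M *\<^sub>v z) $ i = \<alpha> * (M *\<^sub>v w) $ i + (\<Sum>j<m. M $$ (i,j) * (z $ j - \<alpha> * w $ j))"
    unfolding mult_mat_vec_sum[OF M z i] mult_mat_vec_sum[OF M w i]
    by (simp add: sum_distrib_left algebra_simps flip: sum.distrib)
  also have "(M *\<^sub>v w) $ i = 1" using Mw i by simp
  finally have Mz: "(M *\<^sub>v z) $ i = \<alpha> + (\<Sum>j<m. M $$ (i,j) * (z $ j - \<alpha> * w $ j))" by simp
  have "\<bar>\<Sum>j<m. M $$ (i,j) * (z $ j - \<alpha> * w $ j)\<bar> \<le> (\<Sum>j<m. \<bar>M $$ (i,j)\<bar> * (\<alpha> / (SM + 1)))"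
  proof (intro order_trans[OF sum_abs] sum_mono)
    fix j assume "j \<in> {..<m}"
    then show "\<bar>M $$ (i,j) * (z $ j - \<alpha> * w $ j)\<bar> \<le> \<bar>M $$ (i,j)\<bar> * (\<alpha> / (SM + 1))"
      unfolding abs_mult SM_def using near by (intro mult_left_mono) auto
  qed
  also have "\<dots> = (\<Sum>j<m. \<bar>M $$ (i,j)\<bar>) * (\<alpha> / (SM + 1))"
    by (rule sum_distrib_right[symmetric])
  also have "\<dots> \<le> SM * (\<alpha> / (SM + 1))"
  proof (rule mult_right_mono)
    show "(\<Sum>j<m. \<bar>M $$ (i,j)\<bar>) \<le> SM"
      unfolding SM_def using i
      by (intro member_le_sum[where f = "\<lambda>i. \<Sum>j<m. \<bar>M $$ (i,j)\<bar>"]) (auto intro: sum_nonneg)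
  qed (use \<alpha> SM in simp)
  also have "\<dots> < \<alpha>" using \<alpha> SM by (simp add: field_simps)
  finally show ?thesis unfolding Mz by linarith
qed

text \<open>The witness is a truncated Neumann series of \<open>(M\<^sup>-\<^sup>1 N) / \<alpha>\<close> applied to
  \<open>M\<^sup>-\<^sup>1 e\<close>; \<open>\<alpha> M - N\<close> maps it close to \<open>\<alpha> e\<close>.\<close>

lemma pencil_eigenvalue_bound_imp_semipositive:
  fixes M N :: "real mat"
  assumes M: "M \<in> carrier_mat m m" and N: "N \<in> carrier_mat m m" and "0 < m"
    and mono: "monotone_mat M" and Z: "Z_mat M" and Nnn: "nonneg_mat N" and \<alpha>: "0 < \<alpha>"
    and bound: "\<And>\<mu>. pencil_eigenvalue M N \<mu> \<Longrightarrow> cmod \<mu> < \<alpha>"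
  shows "semipositive (\<alpha> \<cdot>\<^sub>m M - N)"
proof -
  obtain W where W: "W \<in> carrier_mat m m" "M * W = 1\<^sub>m m"
    using mat_inverse_det_nonzero[OF M monotone_mat_det_nonzero[OF M mono]] by metis
  define H where "H = W * N"
  have H: "H \<in> carrier_mat m m" using W N by (simp add: H_def)
  have MH: "M * H = N"
    unfolding H_def using W N M by (simp flip: assoc_mult_mat[OF M W(1) N])
  have Hnn: "nonneg_mat H" by (rule monotone_mat_mult_nonneg[OF M H mono]) (simp add: MH Nnn)
  have "spectral_radius (map_mat of_real H) < \<alpha>"
    using spectral_radius_lt_if_pencil_bound[OF M H \<open>0 < m\<close>] bound unfolding MH by blast
  then obtain \<beta> where \<beta>: "spectral_radius (map_mat of_real H) < \<beta>" "\<beta> < \<alpha>"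
    using dense by blast
  have "0 \<le> spectral_radius (map_mat of_real H)"
    using spectral_radius_mem_max(1)[of "map_mat of_real H" m] H \<open>0 < m\<close> by auto
  with \<beta> have "0 < \<beta>" by simp
  obtain c where c: "\<And>k i j. i < m \<Longrightarrow> j < m \<Longrightarrow> \<bar>(H ^\<^sub>m k) $$ (i,j)\<bar> \<le> c * \<beta> ^ k"
    using power_entries_bound[OF H \<beta>(1)] by blast
  obtain w where w: "w \<in> carrier_vec m" "pos_vec w" and Mw: "M *\<^sub>v w = vec m (\<lambda>_. 1)"
    using monotone_Z_mat_pos_solution[OF M mono Z] by blast
  define \<epsilon> where "\<epsilon> = \<alpha> / ((\<Sum>i<m. \<Sum>j<m. \<bar>M $$ (i,j)\<bar>) + 1)"
  have "0 < \<epsilon>" using \<alpha> by (simp add: \<epsilon>_def add_nonneg_pos sum_nonneg)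
  moreover have "nonneg_vec w" using w(2) by (simp add: pos_vec_def nonneg_vec_def less_imp_le)
  ultimately obtain x where x: "x \<in> carrier_vec m" "\<forall>i<m. w $ i \<le> x $ i"
    and near: "\<forall>i<m. \<bar>(\<alpha> \<cdot>\<^sub>v x - H *\<^sub>v x) $ i - \<alpha> * w $ i\<bar> \<le> \<epsilon>"
    using truncated_neumann_series[OF H Hnn c \<open>0 < \<beta>\<close> \<beta>(2) w(1)] by blast
  have "(\<alpha> \<cdot>\<^sub>m M - N) *\<^sub>v x = M *\<^sub>v (\<alpha> \<cdot>\<^sub>v x - H *\<^sub>v x)"
    using M H x unfolding MH[symmetric]
    by (simp add: smult_minus_mult_mat_vec mult_minus_distrib_mat_vec mult_mat_vec)
  moreover have "0 < (M *\<^sub>v (\<alpha> \<cdot>\<^sub>v x - H *\<^sub>v x)) $ i" if "i < m" for i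
    using mult_mat_vec_near_pos[OF M w(1) Mw _ \<alpha> _ that] near x H by (simp add: \<epsilon>_def)
  moreover have "0 < x $ i" if "i < m" for i
    using w x(2) that unfolding pos_vec_def by (metis carrier_vecD less_le_trans)
  ultimately have "pos_vec ((\<alpha> \<cdot>\<^sub>m M - N) *\<^sub>v x)" and "pos_vec x"
    using x(1) M unfolding pos_vec_def by simp_all
  then show ?thesis using x(1) N unfolding semipositive_def by auto
qed

section \<open>Masked splittings of a lower Hessenberg matrix\<close>

definition mask_mat :: "(nat \<Rightarrow> nat \<Rightarrow> bool) \<Rightarrow> 'a::zero mat \<Rightarrow> 'a mat" where
  "mask_mat K B = mat (dim_row B) (dim_col B) (\<lambda>(i,j). if K i j then B $$ (i,j) else 0)"

definition weighted_mask_mat :: "(nat \<Rightarrow> nat \<Rightarrow> bool) \<Rightarrow> real \<Rightarrow> real mat \<Rightarrow> real mat" where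
  "weighted_mask_mat K \<alpha> B = mat (dim_row B) (dim_col B) (\<lambda>(i,j). (if K i j then \<alpha> else 1) * B $$ (i,j))"

lemma dim_mask_mat [simp]:
  "dim_row (mask_mat K B) = dim_row B" "dim_col (mask_mat K B) = dim_col B"
  by (simp_all add: mask_mat_def)

lemma mask_mat_carrier [simp]: "B \<in> carrier_mat m n \<Longrightarrow> mask_mat K B \<in> carrier_mat m n"
  by (simp add: mask_mat_def)

lemma index_mask_mat [simp]:
  "i < dim_row B \<Longrightarrow> j < dim_col B \<Longrightarrow> mask_mat K B $$ (i,j) = (if K i j then B $$ (i,j) else 0)"
  by (simp add: mask_mat_def)

lemma diag_part_eq_mask_mat: "diag_part B = mask_mat (\<lambda>i j. i = j) B"
  by (intro eq_matI) (auto simp: diag_part_def)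

lemma tril_eq_mask_mat: "tril B = mask_mat (\<lambda>i j. j \<le> i) B"
  by (intro eq_matI) (auto simp: tril_def)

lemma triu_eq_mask_mat: "triu B = mask_mat (\<lambda>i j. i \<le> j) B"
  by (intro eq_matI) (auto simp: triu_def)

lemma stair1_eq_mask_mat: "stair1 B = mask_mat (\<lambda>i j. (i = j \<or> odd i) \<and> i \<le> j + 1 \<and> j \<le> i + 1) B"
  by (intro eq_matI) (auto simp: stair1_def tridiag_def)

lemma stair2_eq_mask_mat: "stair2 B = mask_mat (\<lambda>i j. (i = j \<or> even i) \<and> i \<le> j + 1 \<and> j \<le> i + 1) B"
  by (intro eq_matI) (auto simp: stair2_def tridiag_def)

lemma smult_mask_mat_minus:
  assumes "B \<in> carrier_mat m n"
  shows "\<alpha> \<cdot>\<^sub>m mask_mat K B - (mask_mat K B - B) = weighted_mask_mat K \<alpha> B"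
  using assms by (intro eq_matI) (auto simp: weighted_mask_mat_def)

lemma Z_mat_mask_mat: "Z_mat B \<Longrightarrow> Z_mat (mask_mat K B)"
  by (simp add: Z_mat_def)

lemma nonneg_mask_mat_minus:
  assumes "Z_mat B" and "\<And>i. K i i"
  shows "nonneg_mat (mask_mat K B - B)"
  using assms by (auto simp: Z_mat_def nonneg_mat_def)

lemma semipositive_diag_rescale:
  fixes P Q :: "real mat" and r :: "nat \<Rightarrow> real"
  assumes P: "P \<in> carrier_mat m m" and Q: "Q \<in> carrier_mat m m" and r: "\<And>j. j < m \<Longrightarrow> 0 < r j"
    and PQ: "\<And>i j. i < m \<Longrightarrow> j < m \<Longrightarrow> r i * P $$ (i,j) \<le> Q $$ (i,j) * r j"
    and "semipositive P"
  shows "semipositive Q"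
proof -
  obtain x where x: "x \<in> carrier_vec m" "pos_vec x" "pos_vec (P *\<^sub>v x)"
    using \<open>semipositive P\<close> P unfolding semipositive_def by auto
  define y where "y = vec m (\<lambda>j. r j * x $ j)"
  have y: "y \<in> carrier_vec m" by (simp add: y_def)
  have "0 < (Q *\<^sub>v y) $ i" if i: "i < m" for i
  proof -
    have "0 < r i * (P *\<^sub>v x) $ i" using r[OF i] x(3) P i unfolding pos_vec_def by simp
    also have "\<dots> = (\<Sum>j<m. r i * P $$ (i,j) * x $ j)"
      by (simp add: mult_mat_vec_sum[OF P x(1) i] sum_distrib_left mult.assoc)
    also have "\<dots> \<le> (\<Sum>j<m. Q $$ (i,j) * r j * x $ j)"
      using PQ[OF i] x(1,2) unfolding pos_vec_def by (intro sum_mono mult_right_mono) auto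
    also have "\<dots> = (Q *\<^sub>v y) $ i"
      unfolding mult_mat_vec_sum[OF Q y i] by (simp add: y_def mult.assoc)
    finally show ?thesis .
  qed
  moreover have "pos_vec y" using r x(1,2) unfolding pos_vec_def y_def by simp
  ultimately show ?thesis using y Q unfolding semipositive_def pos_vec_def by auto
qed

text \<open>For a lower Hessenberg Z-matrix, a diagonal scaling by powers of \<open>1 / \<alpha>\<close> moves the
  weight \<open>\<alpha>\<close> between kept entries of the two masks.\<close>

lemma semipositive_weighted_mask_rescale:
  fixes B :: "real mat" and e :: "nat \<Rightarrow> nat"
  assumes B: "B \<in> carrier_mat m m" and Z: "Z_mat B" and hess: "lower_hessenberg B"
    and KX: "\<And>i. KX i i" and KY: "\<And>i. KY i i" and \<alpha>: "0 < \<alpha>" "\<alpha> \<le> 1"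
    and e: "\<And>i j. i < m \<Longrightarrow> j < m \<Longrightarrow> j \<noteq> i \<Longrightarrow> j \<le> i + 1 \<Longrightarrow>
              e j + of_bool (KX i j) \<le> e i + of_bool (KY i j)"
    and "semipositive (weighted_mask_mat KX \<alpha> B)"
  shows "semipositive (weighted_mask_mat KY \<alpha> B)"
proof (rule semipositive_diag_rescale[where r = "\<lambda>j. (1 / \<alpha>) ^ e j"])
  define q where "q = 1 / \<alpha>"
  have q: "1 \<le> q" using \<alpha> by (simp add: q_def)
  have weight: "(if b then \<alpha> else 1) = 1 / q ^ of_bool b" for b
    using \<alpha> by (simp add: q_def)
  fix i j assume i: "i < m" and j: "j < m"
  show "(1 / \<alpha>) ^ e i * weighted_mask_mat KX \<alpha> B $$ (i,j)
      \<le> weighted_mask_mat KY \<alpha> B $$ (i,j) * (1 / \<alpha>) ^ e j"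
  proof (cases "j = i \<or> i + 1 < j")
    case True
    then show ?thesis
      using KX KY hess B i j unfolding lower_hessenberg_def weighted_mask_mat_def by auto
  next
    case False
    have "q ^ (e j + of_bool (KX i j)) \<le> q ^ (e i + of_bool (KY i j))"
      using e[OF i j] False q by (intro power_increasing) auto
    then have "(if KY i j then \<alpha> else 1) * q ^ e j \<le> (if KX i j then \<alpha> else 1) * q ^ e i"
      using q unfolding weight by (simp add: field_simps power_add)
    moreover have "B $$ (i,j) \<le> 0" using Z B i j False unfolding Z_mat_def by auto
    ultimately have "((if KX i j then \<alpha> else 1) * q ^ e i) * B $$ (i,j)
        \<le> ((if KY i j then \<alpha> else 1) * q ^ e j) * B $$ (i,j)"
      by (rule mult_right_mono_neg)
    then show ?thesis
      using B i j unfolding weighted_mask_mat_def q_def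
      by (cases "KX i j"; cases "KY i j") (simp_all add: ac_simps)
  qed
qed (use assms in \<open>auto simp: weighted_mask_mat_def\<close>)

lemma pencil_eigenvalue_comparison:
  fixes B :: "real mat" and e :: "nat \<Rightarrow> nat"
  assumes B: "B \<in> carrier_mat m m" and "0 < m" and Z: "Z_mat B" and hess: "lower_hessenberg B"
    and KX: "\<And>i. KX i i" and KY: "\<And>i. KY i i"
    and e: "\<And>i j. i < m \<Longrightarrow> j < m \<Longrightarrow> j \<noteq> i \<Longrightarrow> j \<le> i + 1 \<Longrightarrow>
              e j + of_bool (KX i j) \<le> e i + of_bool (KY i j)"
    and mono: "monotone_mat (mask_mat KX B)" and g: "0 \<le> g" "g < 1"
    and boundX: "\<And>\<mu>. pencil_eigenvalue (mask_mat KX B) (mask_mat KX B - B) \<mu> \<Longrightarrow> cmod \<mu> \<le> g"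
    and eigY: "pencil_eigenvalue (mask_mat KY B) (mask_mat KY B - B) \<mu>"
  shows "cmod \<mu> \<le> g"
proof (rule ccontr)
  assume "\<not> cmod \<mu> \<le> g"
  then obtain \<alpha> where \<alpha>: "g < \<alpha>" "\<alpha> < cmod \<mu>" "\<alpha> < 1"
    using g(2) dense[of g "min (cmod \<mu>) 1"] by auto
  have "semipositive (\<alpha> \<cdot>\<^sub>m mask_mat KX B - (mask_mat KX B - B))"
    using boundX \<alpha>(1) g(1)
    by (intro pencil_eigenvalue_bound_imp_semipositive[OF _ _ \<open>0 < m\<close> mono])
      (use B Z KX in \<open>auto intro: Z_mat_mask_mat nonneg_mask_mat_minus le_less_trans\<close>)
  then have "semipositive (weighted_mask_mat KY \<alpha> B)"
    using semipositive_weighted_mask_rescale[OF B Z hess KX KY _ _ e] \<alpha> g(1)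
    by (simp add: smult_mask_mat_minus[OF B])
  then have "cmod \<mu> < \<alpha>"
    using \<alpha> g(1) B Z KY
    by (intro semipositive_imp_pencil_eigenvalue_lt[OF _ _ _ _ _ _ eigY])
      (auto simp: smult_mask_mat_minus intro: Z_mat_mask_mat nonneg_mask_mat_minus)
  with \<alpha>(2) show False by simp
qed

section \<open>The spectrum of the iteration matrices\<close>

lemma pencil_eigenvalue_iff_det:
  fixes M N :: "real mat"
  assumes M: "M \<in> carrier_mat m m" and N: "N \<in> carrier_mat m m"
  shows "pencil_eigenvalue M N \<mu> \<longleftrightarrow> det (map_mat of_real N - \<mu> \<cdot>\<^sub>m map_mat of_real M) = 0"
proof -
  let ?M = "map_mat complex_of_real M" and ?N = "map_mat complex_of_real N"
  have C: "?N - \<mu> \<cdot>\<^sub>m ?M \<in> carrier_mat m m" using M by (intro minus_carrier_mat) simp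
  have "(?N - \<mu> \<cdot>\<^sub>m ?M) *\<^sub>v v = 0\<^sub>v m \<longleftrightarrow> ?N *\<^sub>v v = \<mu> \<cdot>\<^sub>v (?M *\<^sub>v v)"
    if v: "v \<in> carrier_vec m" for v
  proof -
    have "(?N - \<mu> \<cdot>\<^sub>m ?M) *\<^sub>v v = ?N *\<^sub>v v - \<mu> \<cdot>\<^sub>v (?M *\<^sub>v v)"
      using M N v by (simp add: minus_mult_distrib_mat_vec smult_mult_mat_vec)
    then show ?thesis using M N v by (auto simp: vec_eq_iff)
  qed
  then show ?thesis
    using M unfolding pencil_eigenvalue_def det_0_iff_vec_prod_zero_field[OF C] by auto
qed

lemma pencil_eigenvalue_transpose:
  fixes M N :: "real mat"
  assumes M: "M \<in> carrier_mat m m" and N: "N \<in> carrier_mat m m"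
  shows "pencil_eigenvalue (transpose_mat M) (transpose_mat N) \<mu> \<longleftrightarrow> pencil_eigenvalue M N \<mu>"
proof -
  have "map_mat of_real (transpose_mat N) - \<mu> \<cdot>\<^sub>m map_mat of_real (transpose_mat M)
      = transpose_mat (map_mat of_real N - \<mu> \<cdot>\<^sub>m map_mat of_real M)"
    using M N by (intro eq_matI) auto
  moreover have "map_mat of_real N - \<mu> \<cdot>\<^sub>m map_mat of_real M \<in> carrier_mat m m"
    using M by (intro minus_carrier_mat) simp
  ultimately show ?thesis
    using M N by (simp add: pencil_eigenvalue_iff_det det_transpose)
qed

lemma pencil_eigenvalue_one_iff:
  fixes M B :: "real mat"
  assumes M: "M \<in> carrier_mat m m" and B: "B \<in> carrier_mat m m"
  shows "pencil_eigenvalue M (M - B) 1 \<longleftrightarrow> det B = 0"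
proof -
  have "map_mat of_real (M - B) - 1 \<cdot>\<^sub>m map_mat of_real M = (- 1) \<cdot>\<^sub>m map_mat complex_of_real B"
    using M B by (intro eq_matI) auto
  then show ?thesis using M B by (simp add: pencil_eigenvalue_iff_det[OF M minus_carrier_mat[OF B]])
qed

lemma char_matrix_inverse_mult:
  fixes W M A :: "'a::field mat"
  assumes W: "W \<in> carrier_mat n n" and M: "M \<in> carrier_mat n n" and A: "A \<in> carrier_mat n n"
    and WM: "W * M = 1\<^sub>m n"
  shows "char_matrix (W * (M - A)) e = W * ((1 - e) \<cdot>\<^sub>m M - A)"
proof -
  have "W * (M - A) = 1\<^sub>m n - W * A" using W M A WM by (simp add: mult_minus_distrib_mat)
  moreover have "W * ((1 - e) \<cdot>\<^sub>m M - A) = (1 - e) \<cdot>\<^sub>m (W * M) - W * A"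
    using W M A by (simp add: mult_minus_distrib_mat[of W n n _ n] mult_smult_distrib)
  ultimately show ?thesis
    unfolding char_matrix_def WM using W A by (intro eq_matI) (auto simp: algebra_simps)
qed

lemma smult_inverse_mult_minus:
  fixes W L P A :: "'a::field mat"
  assumes W: "W \<in> carrier_mat n n" and L: "L \<in> carrier_mat n n" and P: "P \<in> carrier_mat n n"
    and A: "A \<in> carrier_mat n n" and WL: "W * L = 1\<^sub>m n"
  shows "c \<cdot>\<^sub>m (W * P) - A = W * (c \<cdot>\<^sub>m P - L * A)"
proof -
  have "W * (c \<cdot>\<^sub>m P - L * A) = c \<cdot>\<^sub>m (W * P) - (W * L) * A"
    using W L P A by (simp add: mult_minus_distrib_mat[of W n n _ n] mult_smult_distrib assoc_mult_mat)
  then show ?thesis using WL A by simp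
qed

lemma Lmat_carrier: "Lmat (Suc m) \<in> carrier_mat (Suc m) (Suc m)"
  unfolding Lmat_def by auto

lemma det_Lmat: "det (Lmat n) = 1"
  unfolding Lmat_def by (subst det_four_block_mat_upper_right_zero_col) auto

lemma Lmat_mult_zero_colsum:
  fixes A :: "real mat"
  assumes A: "A \<in> carrier_mat (Suc m) (Suc m)"
    and colsum: "\<And>j. j < Suc m \<Longrightarrow> (\<Sum>i<Suc m. A $$ (i,j)) = 0"
    and i: "i < Suc m" and j: "j < Suc m"
  shows "(Lmat (Suc m) * A) $$ (i,j) = (if i < m then A $$ (i,j) else 0)"
proof -
  have "(Lmat (Suc m) * A) $$ (i,j) = (\<Sum>k<Suc m. Lmat (Suc m) $$ (i,k) * A $$ (k,j))"
    using A i j Lmat_carrier[of m] by (simp add: scalar_prod_def atLeast0LessThan)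
  also have "\<dots> = (\<Sum>k<Suc m. (if i < m then of_bool (i = k) else 1) * A $$ (k,j))"
    using i by (intro sum.cong) (auto simp: Lmat_def)
  also have "\<dots> = (if i < m then A $$ (i,j) else 0)"
    using colsum[OF j] i by (auto simp: of_bool_def if_distrib[of "\<lambda>x. x * _"] cong: if_cong)
  finally show ?thesis .
qed

lemma det_blk_minus_Lmat_mult:
  fixes A D :: "real mat" and c :: complex
  assumes A: "A \<in> carrier_mat (Suc m) (Suc m)"
    and colsum: "\<And>j. j < Suc m \<Longrightarrow> (\<Sum>i<Suc m. A $$ (i,j)) = 0"
    and D: "D \<in> carrier_mat m m"
  shows "det (c \<cdot>\<^sub>m map_mat of_real (blk (Suc m) D) - map_mat of_real (Lmat (Suc m) * A))
       = c * det (c \<cdot>\<^sub>m map_mat of_real D - map_mat of_real (lead_sub A))"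
proof -
  let ?c = "map_mat complex_of_real"
  let ?U = "c \<cdot>\<^sub>m ?c D - ?c (lead_sub A)"
  define LA where "LA = Lmat (Suc m) * A"
  have LA: "LA \<in> carrier_mat (Suc m) (Suc m)" using A Lmat_carrier[of m] by (simp add: LA_def)
  have "c \<cdot>\<^sub>m ?c (blk (Suc m) D) - ?c LA
      = four_block_mat ?U (mat m 1 (\<lambda>(i,_). - of_real (A $$ (i,m)))) (0\<^sub>m 1 m) (c \<cdot>\<^sub>m 1\<^sub>m 1)"
    using A D LA Lmat_mult_zero_colsum[OF A colsum, folded LA_def]
    by (intro eq_matI) (auto simp: blk_def lead_sub_def less_Suc_eq)
  also have "det \<dots> = det ?U * det (c \<cdot>\<^sub>m (1\<^sub>m 1 :: complex mat))"
    using D A by (intro det_four_block_mat_lower_left_zero) (auto simp: lead_sub_def)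
  finally show ?thesis by (simp add: LA_def)
qed

lemma det_char_matrix_inverse_split:
  fixes W WL L P A :: "real mat" and \<mu> :: complex
  assumes W: "W \<in> carrier_mat n n" and WL: "WL \<in> carrier_mat n n" and L: "L \<in> carrier_mat n n"
    and P: "P \<in> carrier_mat n n" and A: "A \<in> carrier_mat n n"
    and WLL: "WL * L = 1\<^sub>m n" and WP: "W * (WL * P) = 1\<^sub>m n"
  shows "det (char_matrix (map_mat of_real (W * (WL * P - A))) \<mu>)
    = of_real (det W * det WL) * det ((1 - \<mu>) \<cdot>\<^sub>m map_mat of_real P - map_mat of_real (L * A))"
proof -
  let ?c = "map_mat complex_of_real"
  have cWP: "?c (WL * P) = ?c WL * ?c P" using WL P by (simp add: of_real_hom.mat_hom_mult)
  have "?c (WL * P - A) = ?c (WL * P) - ?c A" using WL P A by (intro eq_matI) auto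
  moreover have "WL * P - A \<in> carrier_mat n n" using A by (rule minus_carrier_mat)
  ultimately have "?c (W * (WL * P - A)) = ?c W * (?c (WL * P) - ?c A)"
    by (simp add: of_real_hom.mat_hom_mult[OF W])
  then have "char_matrix (?c (W * (WL * P - A))) \<mu> = ?c W * ((1 - \<mu>) \<cdot>\<^sub>m ?c (WL * P) - ?c A)"
    using W WL P A of_real_mat_inverse[OF W _ WP] by (simp add: char_matrix_inverse_mult)
  also have "(1 - \<mu>) \<cdot>\<^sub>m ?c (WL * P) - ?c A = ?c WL * ((1 - \<mu>) \<cdot>\<^sub>m ?c P - ?c L * ?c A)"
    unfolding cWP using WL P A L of_real_mat_inverse[OF WL L WLL]
    by (intro smult_inverse_mult_minus) auto
  also have "?c L * ?c A = ?c (L * A)" using L A by (simp add: of_real_hom.mat_hom_mult)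
  finally have char: "char_matrix (?c (W * (WL * P - A))) \<mu>
      = ?c W * (?c WL * ((1 - \<mu>) \<cdot>\<^sub>m ?c P - ?c (L * A)))" .
  have "(1 - \<mu>) \<cdot>\<^sub>m ?c P - ?c (L * A) \<in> carrier_mat n n"
    using L A by (intro minus_carrier_mat) simp
  then show ?thesis unfolding char using W WL by (simp add: det_mult[of _ n])
qed

lemma iter_mat_factor:
  fixes A :: "real mat" and X :: "real mat \<Rightarrow> real mat"
  assumes A: "A \<in> carrier_mat (Suc m) (Suc m)"
    and D: "X (lead_sub A) \<in> carrier_mat m m" and detD: "det (X (lead_sub A)) \<noteq> 0"
  obtains W WL where "W \<in> carrier_mat (Suc m) (Suc m)" "WL \<in> carrier_mat (Suc m) (Suc m)"
    "WL * Lmat (Suc m) = 1\<^sub>m (Suc m)" "W * (WL * blk (Suc m) (X (lead_sub A))) = 1\<^sub>m (Suc m)"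
    "iter_mat X A = W * (WL * blk (Suc m) (X (lead_sub A)) - A)"
proof -
  let ?n = "Suc m"
  define P where "P = blk ?n (X (lead_sub A))"
  have L: "Lmat ?n \<in> carrier_mat ?n ?n" by (rule Lmat_carrier)
  obtain WL where WL: "mat_inverse (Lmat ?n) = Some WL" "WL \<in> carrier_mat ?n ?n" "WL * Lmat ?n = 1\<^sub>m ?n"
    using mat_inverse_det_nonzero[OF L] det_Lmat by (metis one_neq_zero)
  have P: "P \<in> carrier_mat ?n ?n" using D by (auto simp: P_def blk_def)
  have "det P = det (X (lead_sub A))"
    unfolding P_def blk_def using D by (subst det_four_block_mat_upper_right_zero_col) auto
  moreover have "det WL * det (Lmat ?n) = 1" using det_mult[OF WL(2) L] WL(3) by simp
  ultimately have "det (WL * P) \<noteq> 0" using det_mult[OF WL(2) P] detD by (auto simp: det_Lmat)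
  then obtain W where W: "mat_inverse (WL * P) = Some W" "W \<in> carrier_mat ?n ?n" "W * (WL * P) = 1\<^sub>m ?n"
    using mat_inverse_det_nonzero[of "WL * P" ?n] WL(2) P by auto
  have "iter_mat X A = W * (WL * P - A)"
    unfolding iter_mat_def Mprime_def mat_inv_def using A WL(1) W(1) by (simp add: P_def)
  then show ?thesis using that W(2,3) WL(2,3) by (simp add: P_def)
qed

text \<open>Since \<open>e\<^sup>T A = 0\<close>, the last row of \<open>L A\<close> vanishes, so \<open>det (\<lambda> I - M'\<^sup>-\<^sup>1 N')\<close>
  is a nonzero multiple of \<open>(1 - \<lambda>) det ((1 - \<lambda>) X(A\<^sub>n\<^sub>-\<^sub>1) - A\<^sub>n\<^sub>-\<^sub>1)\<close>.\<close>

lemma spectrum_iter_mat: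
  fixes A :: "real mat" and X :: "real mat \<Rightarrow> real mat"
  assumes A: "A \<in> carrier_mat (Suc m) (Suc m)"
    and colsum: "\<And>j. j < Suc m \<Longrightarrow> (\<Sum>i<Suc m. A $$ (i,j)) = 0"
    and D: "X (lead_sub A) \<in> carrier_mat m m" and detD: "det (X (lead_sub A)) \<noteq> 0"
  shows "iter_mat X A \<in> carrier_mat (Suc m) (Suc m)"
    and "spectrum (map_mat of_real (iter_mat X A))
      = insert 1 (Collect (pencil_eigenvalue (X (lead_sub A)) (X (lead_sub A) - lead_sub A)))"
proof -
  let ?n = "Suc m" and ?c = "map_mat complex_of_real" and ?D = "X (lead_sub A)"
  obtain W WL where W: "W \<in> carrier_mat ?n ?n" and WL: "WL \<in> carrier_mat ?n ?n"
    and WLL: "WL * Lmat ?n = 1\<^sub>m ?n" and WP: "W * (WL * blk ?n ?D) = 1\<^sub>m ?n"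
    and iter: "iter_mat X A = W * (WL * blk ?n ?D - A)"
    by (rule iter_mat_factor[where X = X, OF A D detD])
  have P: "blk ?n ?D \<in> carrier_mat ?n ?n" using D by (auto simp: blk_def)
  show carrier: "iter_mat X A \<in> carrier_mat ?n ?n"
    unfolding iter using W A by (metis mult_carrier_mat minus_carrier_mat)
  have "det W \<noteq> 0" and "det WL \<noteq> 0"
    using det_mult[OF W mult_carrier_mat[OF WL P]] WP det_mult[OF WL Lmat_carrier] WLL by auto
  moreover have "det (char_matrix (?c (iter_mat X A)) \<mu>)
      = of_real (det W * det WL) * ((1 - \<mu>) * det ((1 - \<mu>) \<cdot>\<^sub>m ?c ?D - ?c (lead_sub A)))" for \<mu>
    unfolding iter det_char_matrix_inverse_split[OF W WL Lmat_carrier P A WLL WP]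
    by (simp add: det_blk_minus_Lmat_mult[OF A colsum D])
  ultimately have det_char: "det (char_matrix (?c (iter_mat X A)) \<mu>) = 0
      \<longleftrightarrow> (1 - \<mu>) * det ((1 - \<mu>) \<cdot>\<^sub>m ?c ?D - ?c (lead_sub A)) = 0" for \<mu>
    by simp
  have B: "lead_sub A \<in> carrier_mat m m" using A by (simp add: lead_sub_def)
  have pencil: "pencil_eigenvalue ?D (?D - lead_sub A) \<mu> \<longleftrightarrow>
      det ((1 - \<mu>) \<cdot>\<^sub>m ?c ?D - ?c (lead_sub A)) = 0" for \<mu>
  proof -
    have "?c (?D - lead_sub A) - \<mu> \<cdot>\<^sub>m ?c ?D = (1 - \<mu>) \<cdot>\<^sub>m ?c ?D - ?c (lead_sub A)"
      using D B by (intro eq_matI) (auto simp: algebra_simps)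
    then show ?thesis using pencil_eigenvalue_iff_det[OF D minus_carrier_mat[OF B]] by simp
  qed
  have "?c (iter_mat X A) \<in> carrier_mat ?n ?n" using carrier by simp
  then show "spectrum (?c (iter_mat X A)) = insert 1 (Collect (pencil_eigenvalue ?D (?D - lead_sub A)))"
    unfolding spectrum_def eigenvalue_det[OF \<open>?c (iter_mat X A) \<in> _\<close>] det_char pencil by auto
qed

section \<open>Irreducibility and the Jacobi splitting\<close>

lemma colsum_diag_nonneg:
  fixes A :: "real mat"
  assumes A: "A \<in> carrier_mat n n" and Z: "Z_mat A"
    and colsum: "\<And>j. j < n \<Longrightarrow> (\<Sum>i<n. A $$ (i,j)) = 0" and j: "j < n"
  shows "A $$ (j,j) = (\<Sum>i\<in>{..<n} - {j}. - A $$ (i,j))" and "0 \<le> A $$ (j,j)"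
proof -
  show diag: "A $$ (j,j) = (\<Sum>i\<in>{..<n} - {j}. - A $$ (i,j))"
    using colsum[OF j] sum_split_diag[OF j, of "\<lambda>i. A $$ (i,j)"] by (simp add: sum_negf)
  show "0 \<le> A $$ (j,j)"
    unfolding diag using Z A j by (intro sum_nonneg) (auto simp: Z_mat_def)
qed

text \<open>Since \<open>e\<^sup>T A = 0\<close>, a nonnegative \<open>w\<close> with \<open>A\<^sup>T w \<le> 0\<close> must be constant on an
  irreducible \<open>A\<close>; the proof looks at the set where \<open>w\<close> attains its maximum.\<close>

lemma irreducible_colsum_zero_subsolution:
  fixes A :: "real mat" and w :: "nat \<Rightarrow> real"
  assumes A: "A \<in> carrier_mat n n" and Z: "Z_mat A"
    and colsum: "\<And>j. j < n \<Longrightarrow> (\<Sum>i<n. A $$ (i,j)) = 0" and irr: "irreducible_mat A"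
    and w: "\<And>i. i < n \<Longrightarrow> 0 \<le> w i" and k: "k < n" "w k = 0"
    and sub: "\<And>j. j < n \<Longrightarrow> A $$ (j,j) * w j \<le> (\<Sum>i\<in>{..<n} - {j}. - A $$ (i,j) * w i)"
    and i: "i < n"
  shows "w i = 0"
proof (rule ccontr)
  assume "w i \<noteq> 0"
  define t where "t = Max (w ` {..<n})"
  have t_ge: "w j \<le> t" if "j < n" for j unfolding t_def using that by (intro Max_ge) auto
  have "t \<in> w ` {..<n}" unfolding t_def using i by (intro Max_in) auto
  then obtain j0 where j0: "j0 < n" "w j0 = t" by auto
  have t: "0 < t" using w[OF i] t_ge[OF i] \<open>w i \<noteq> 0\<close> by simp
  define I where "I = {j. j < n \<and> w j = t}"
  have closed: "A $$ (l,j) = 0" if j: "j \<in> I" and l: "l < n" "l \<notin> I" for j l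
  proof -
    have jn: "j < n" and wj: "w j = t" using j by (auto simp: I_def)
    have terms_nonneg: "0 \<le> - A $$ (i,j) * (t - w i)" if "i \<in> {..<n} - {j}" for i
      using that Z A jn t_ge[of i] by (intro mult_nonneg_nonneg) (auto simp: Z_mat_def)
    have diag: "A $$ (j,j) = (\<Sum>i\<in>{..<n} - {j}. - A $$ (i,j))"
      by (rule colsum_diag_nonneg(1)[OF A Z colsum jn])
    have "(\<Sum>i\<in>{..<n} - {j}. - A $$ (i,j) * (t - w i))
        = (\<Sum>i\<in>{..<n} - {j}. - A $$ (i,j)) * t - (\<Sum>i\<in>{..<n} - {j}. - A $$ (i,j) * w i)"
      by (simp add: right_diff_distrib sum_subtractf sum_distrib_right sum_negf)
    also have "\<dots> = A $$ (j,j) * w j - (\<Sum>i\<in>{..<n} - {j}. - A $$ (i,j) * w i)"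
      by (simp only: diag wj)
    also have "\<dots> \<le> 0" using sub[OF jn] by simp
    finally have "(\<Sum>i\<in>{..<n} - {j}. - A $$ (i,j) * (t - w i)) \<le> 0" .
    moreover have "0 \<le> (\<Sum>i\<in>{..<n} - {j}. - A $$ (i,j) * (t - w i))"
      by (rule sum_nonneg) (rule terms_nonneg)
    ultimately have "(\<Sum>i\<in>{..<n} - {j}. - A $$ (i,j) * (t - w i)) = 0" by linarith
    moreover have "(\<Sum>i\<in>{..<n} - {j}. - A $$ (i,j) * (t - w i)) = 0
        \<longleftrightarrow> (\<forall>i\<in>{..<n} - {j}. - A $$ (i,j) * (t - w i) = 0)"
      by (rule sum_nonneg_eq_0_iff) (simp, rule terms_nonneg)
    ultimately have zero: "\<forall>i\<in>{..<n} - {j}. - A $$ (i,j) * (t - w i) = 0" by blast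
    have "l \<noteq> j" "w l \<noteq> t" using l j by (auto simp: I_def)
    then show ?thesis using zero[rule_format, of l] l(1) by simp
  qed
  have "k \<in> {0..<n} - I" using k t by (auto simp: I_def)
  moreover have "j0 \<notin> {0..<n} - I" using j0 by (auto simp: I_def)
  moreover have "\<forall>l\<in>{0..<n} - I. \<forall>j\<in>{0..<n} - ({0..<n} - I). A $$ (l,j) = 0"
    using closed by (auto simp: I_def)
  ultimately have "\<exists>J. J \<noteq> {} \<and> J \<subset> {0..<n} \<and> (\<forall>l\<in>J. \<forall>j\<in>{0..<n} - J. A $$ (l,j) = 0)"
    using j0 by (intro exI[of _ "{0..<n} - I"]) auto
  then show False using irr A unfolding irreducible_mat_def by simp
qed

lemma irreducible_colsum_zero_diag_pos:
  fixes A :: "real mat"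
  assumes A: "A \<in> carrier_mat n n" and "2 \<le> n" and Z: "Z_mat A"
    and colsum: "\<And>j. j < n \<Longrightarrow> (\<Sum>i<n. A $$ (i,j)) = 0" and irr: "irreducible_mat A"
    and j: "j < n"
  shows "0 < A $$ (j,j)"
proof (rule ccontr)
  assume "\<not> 0 < A $$ (j,j)"
  then have Ajj: "A $$ (j,j) = 0" using colsum_diag_nonneg(2)[OF A Z colsum j] by simp
  define k :: nat where "k = (if j = 0 then 1 else 0)"
  have k: "k < n" "k \<noteq> j" using \<open>2 \<le> n\<close> by (auto simp: k_def)
  define w :: "nat \<Rightarrow> real" where "w i = (if i = j then 1 else 0)" for i
  have "w j = 0"
  proof (rule irreducible_colsum_zero_subsolution[OF A Z colsum irr _ k(1) _ _ j])
    fix l assume l: "l < n"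
    have "A $$ (l,l) * w l = 0" using Ajj by (simp add: w_def)
    also have "0 \<le> (\<Sum>i\<in>{..<n} - {l}. - A $$ (i,l) * w i)"
      using Z A l by (intro sum_nonneg) (auto simp: Z_mat_def w_def)
    finally show "A $$ (l,l) * w l \<le> (\<Sum>i\<in>{..<n} - {l}. - A $$ (i,l) * w i)" .
  qed (use k in \<open>auto simp: w_def\<close>)
  then show False by (simp add: w_def)
qed

lemma diag_pencil_left_eigenvector:
  fixes B :: "real mat"
  assumes B: "B \<in> carrier_mat m m"
    and eig: "pencil_eigenvalue (diag_part B) (diag_part B - B) \<mu>"
  obtains u where "u \<in> carrier_vec m" "u \<noteq> 0\<^sub>v m"
    "\<And>j. j < m \<Longrightarrow> (\<Sum>i\<in>{..<m} - {j}. of_real (- B $$ (i,j)) * u $ i) = \<mu> * (of_real (B $$ (j,j)) * u $ j)"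
proof -
  let ?D = "diag_part B"
  have D: "?D \<in> carrier_mat m m" using B by (simp add: diag_part_def)
  \<comment> \<open>a left eigenvector is a right eigenvector of the transposed pencil\<close>
  have "pencil_eigenvalue (transpose_mat ?D) (transpose_mat (?D - B)) \<mu>"
    using eig pencil_eigenvalue_transpose[OF D minus_carrier_mat[OF B]] by simp
  then obtain u where u: "u \<in> carrier_vec m" "u \<noteq> 0\<^sub>v m"
    and eq: "map_mat of_real (transpose_mat (?D - B)) *\<^sub>v u
      = \<mu> \<cdot>\<^sub>v (map_mat of_real (transpose_mat ?D) *\<^sub>v u)"
    using D unfolding pencil_eigenvalue_def by auto
  have T1: "map_mat of_real (transpose_mat (?D - B)) \<in> carrier_mat m m"
    and T2: "map_mat of_real (transpose_mat ?D) \<in> carrier_mat m m" using D B by auto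
  have "(\<Sum>i\<in>{..<m} - {j}. of_real (- B $$ (i,j)) * u $ i) = \<mu> * (of_real (B $$ (j,j)) * u $ j)"
    if j: "j < m" for j
  proof -
    have "(map_mat of_real (transpose_mat (?D - B)) *\<^sub>v u) $ j
        = (\<Sum>i<m. of_real ((if i = j then B $$ (j,j) else 0) - B $$ (i,j)) * u $ i)"
      unfolding mult_mat_vec_sum[OF T1 u(1) j] using B j by (intro sum.cong) (auto simp: diag_part_def)
    also have "\<dots> = (\<Sum>i\<in>{..<m} - {j}. of_real (- B $$ (i,j)) * u $ i)"
      by (simp add: sum_split_diag[OF j])
    finally have lhs: "(map_mat of_real (transpose_mat (?D - B)) *\<^sub>v u) $ j
        = (\<Sum>i\<in>{..<m} - {j}. of_real (- B $$ (i,j)) * u $ i)" .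
    have "(map_mat of_real (transpose_mat ?D) *\<^sub>v u) $ j
        = (\<Sum>i<m. (if i = j then of_real (B $$ (j,j)) * u $ j else 0))"
      unfolding mult_mat_vec_sum[OF T2 u(1) j] using B j by (intro sum.cong) (auto simp: diag_part_def)
    also have "\<dots> = of_real (B $$ (j,j)) * u $ j" using j by simp
    finally show ?thesis using arg_cong[OF eq, of "\<lambda>v. v $ j"] lhs D j by simp
  qed
  with u that show ?thesis by blast
qed

lemma jacobi_pencil_eigenvalue_lt_1:
  fixes A :: "real mat"
  assumes A: "A \<in> carrier_mat (Suc m) (Suc m)" and Z: "Z_mat A"
    and colsum: "\<And>j. j < Suc m \<Longrightarrow> (\<Sum>i<Suc m. A $$ (i,j)) = 0" and irr: "irreducible_mat A"
    and eig: "pencil_eigenvalue (diag_part (lead_sub A)) (diag_part (lead_sub A) - lead_sub A) \<mu>"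
  shows "cmod \<mu> < 1"
proof (rule ccontr)
  assume "\<not> cmod \<mu> < 1"
  then have \<mu>: "1 \<le> cmod \<mu>" by simp
  have B: "lead_sub A \<in> carrier_mat m m" and B_index: "\<And>i j. i < m \<Longrightarrow> j < m \<Longrightarrow> lead_sub A $$ (i,j) = A $$ (i,j)"
    using A by (simp_all add: lead_sub_def)
  obtain u where u: "u \<in> carrier_vec m" "u \<noteq> 0\<^sub>v m" and colB: "\<And>j. j < m \<Longrightarrow>
      (\<Sum>i\<in>{..<m} - {j}. of_real (- lead_sub A $$ (i,j)) * u $ i) = \<mu> * (of_real (lead_sub A $$ (j,j)) * u $ j)"
    using diag_pencil_left_eigenvector[OF B eig] by metis
  have col: "(\<Sum>i\<in>{..<m} - {j}. of_real (- A $$ (i,j)) * u $ i) = \<mu> * (of_real (A $$ (j,j)) * u $ j)"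
    if j: "j < m" for j
  proof -
    have "(\<Sum>i\<in>{..<m} - {j}. of_real (- lead_sub A $$ (i,j)) * u $ i)
        = (\<Sum>i\<in>{..<m} - {j}. of_real (- A $$ (i,j)) * u $ i)"
      using j B_index by (intro sum.cong) auto
    then show ?thesis using colB[OF j] B_index[OF j j] by simp
  qed
  have off: "- A $$ (i,j) \<ge> 0" if "i < Suc m" "j < Suc m" "i \<noteq> j" for i j
    using Z A that by (simp add: Z_mat_def)
  define w where "w i = (if i < m then cmod (u $ i) else 0)" for i
  have sub: "A $$ (j,j) * w j \<le> (\<Sum>i\<in>{..<Suc m} - {j}. - A $$ (i,j) * w i)" if j: "j < Suc m" for j
  proof (cases "j < m")
    case True
    have Ajj: "0 \<le> A $$ (j,j)" by (rule colsum_diag_nonneg(2)[OF A Z colsum j])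
    have "A $$ (j,j) * w j \<le> cmod \<mu> * (A $$ (j,j) * cmod (u $ j))"
      using \<mu> Ajj True by (simp add: w_def mult_right_mono[of 1 "cmod \<mu>", simplified] mult.assoc)
    also have "\<dots> = cmod (\<Sum>i\<in>{..<m} - {j}. of_real (- A $$ (i,j)) * u $ i)"
      unfolding col[OF True] using Ajj by (simp add: norm_mult)
    also have "\<dots> \<le> (\<Sum>i\<in>{..<m} - {j}. - A $$ (i,j) * w i)"
    proof (rule order_trans[OF norm_sum sum_mono])
      fix i assume "i \<in> {..<m} - {j}"
      then show "cmod (of_real (- A $$ (i,j)) * u $ i) \<le> - A $$ (i,j) * w i"
        using off[of i j] True by (simp add: w_def norm_mult)
    qed
    also have "\<dots> = (\<Sum>i\<in>{..<Suc m} - {j}. - A $$ (i,j) * w i)"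
      using True by (simp add: lessThan_Suc insert_Diff_if w_def)
    finally show ?thesis .
  next
    case False
    have "0 \<le> (\<Sum>i\<in>{..<Suc m} - {j}. - A $$ (i,j) * w i)"
      using off j by (intro sum_nonneg) (auto simp: w_def intro: mult_nonpos_nonneg)
    then show ?thesis using False by (simp add: w_def)
  qed
  have w0: "w i = 0" if "i < Suc m" for i
    by (rule irreducible_colsum_zero_subsolution[OF A Z colsum irr _ lessI _ sub that])
      (auto simp: w_def)
  have "u $ i = 0" if "i < m" for i using w0[of i] that by (simp add: w_def)
  then have "u = 0\<^sub>v m" using u(1) by (intro eq_vecI) auto
  with u(2) show False ..
qed

section \<open>The comparison chain\<close>

locale hessenberg_M_matrix =
  fixes m :: nat and A :: "real mat"
  assumes A: "A \<in> carrier_mat (Suc m) (Suc m)" and m: "0 < m"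
    and Z: "Z_mat A" and colsum: "\<And>j. j < Suc m \<Longrightarrow> (\<Sum>i<Suc m. A $$ (i,j)) = 0"
    and irr: "irreducible_mat A" and hess: "lower_hessenberg A"
begin

abbreviation B :: "real mat" where "B \<equiv> lead_sub A"

abbreviation pencil_spectrum :: "(nat \<Rightarrow> nat \<Rightarrow> bool) \<Rightarrow> complex set" where
  "pencil_spectrum K \<equiv> Collect (pencil_eigenvalue (mask_mat K B) (mask_mat K B - B))"

lemma B_carrier: "B \<in> carrier_mat m m"
  using A by (simp add: lead_sub_def)

lemma B_index: "i < m \<Longrightarrow> j < m \<Longrightarrow> B $$ (i,j) = A $$ (i,j)"
  using A by (simp add: lead_sub_def)

lemma Z_mat_B: "Z_mat B"
  using Z A by (simp add: Z_mat_def lead_sub_def)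

lemma lower_hessenberg_B: "lower_hessenberg B"
  using hess A by (simp add: lower_hessenberg_def lead_sub_def)

lemma det_B: "det B \<noteq> 0"
proof
  assume "det B = 0"
  then have "pencil_eigenvalue (diag_part B) (diag_part B - B) 1"
    using pencil_eigenvalue_one_iff[OF _ B_carrier] B_carrier by (simp add: diag_part_def)
  from jacobi_pencil_eigenvalue_lt_1[OF A Z colsum irr this] show False by simp
qed

lemma monotone_mask_mat:
  fixes rk :: "nat \<Rightarrow> nat"
  assumes K: "\<And>i. K i i" and rank: "\<And>i j. i < m \<Longrightarrow> j < m \<Longrightarrow> i \<noteq> j \<Longrightarrow> K i j \<Longrightarrow> rk j < rk i"
  shows "monotone_mat (mask_mat K B)"
proof (rule monotone_mat_by_rank[where m=m and rk=rk])
  fix i assume "i < m"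
  then show "0 < mask_mat K B $$ (i,i)"
    using K B_carrier B_index irreducible_colsum_zero_diag_pos[OF A _ Z colsum irr] m by simp
qed (use B_carrier Z_mat_B rank in \<open>auto intro: Z_mat_mask_mat split: if_splits\<close>)

lemma gamma_iter_mat_eq:
  assumes X: "X B = mask_mat K B" and det: "det (mask_mat K B) \<noteq> 0"
  shows "finite (pencil_spectrum K)" and "gamma (iter_mat X A) = Max (insert 0 (cmod ` pencil_spectrum K))"
proof -
  have D: "X B \<in> carrier_mat m m" using X B_carrier by simp
  note spec = spectrum_iter_mat[where X=X, OF A colsum D] det X
  have "1 \<notin> pencil_spectrum K" using pencil_eigenvalue_one_iff[of _ m B] B_carrier det_B by simp
  moreover have "spectrum (map_mat of_real (iter_mat X A)) = insert 1 (pencil_spectrum K)"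
    using spec(2) det by (simp add: X)
  ultimately have eq: "spectrum (map_mat of_real (iter_mat X A)) - {1} = pencil_spectrum K"
    by auto
  have "finite (spectrum (map_mat complex_of_real (iter_mat X A)))"
    using spec(1) det X card_finite_spectrum(1)[of "map_mat complex_of_real (iter_mat X A)"] by simp
  then show "finite (pencil_spectrum K)" using eq by (metis finite_Diff)
  show "gamma (iter_mat X A) = Max (insert 0 (cmod ` pencil_spectrum K))"
    unfolding gamma_def eq ..
qed

lemma gamma_iter_mat_mono:
  fixes e :: "nat \<Rightarrow> nat"
  assumes X: "X B = mask_mat KX B" and KX: "\<And>i. KX i i" and monoX: "monotone_mat (mask_mat KX B)"
    and Y: "Y B = mask_mat KY B" and KY: "\<And>i. KY i i" and monoY: "monotone_mat (mask_mat KY B)"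
    and e: "\<And>i j. i < m \<Longrightarrow> j < m \<Longrightarrow> j \<noteq> i \<Longrightarrow> j \<le> i + 1 \<Longrightarrow>
              e j + of_bool (KX i j) \<le> e i + of_bool (KY i j)"
    and gX: "gamma (iter_mat X A) < 1"
  shows "gamma (iter_mat Y A) \<le> gamma (iter_mat X A)"
proof -
  have det: "det (mask_mat K B) \<noteq> 0" if "monotone_mat (mask_mat K B)" for K
    using monotone_mat_det_nonzero[OF mask_mat_carrier[OF B_carrier] that] .
  note gX_eq = gamma_iter_mat_eq[where X=X and K=KX, OF X det[OF monoX]]
    and gY_eq = gamma_iter_mat_eq[where X=Y and K=KY, OF Y det[OF monoY]]
  have g0: "0 \<le> gamma (iter_mat X A)" unfolding gX_eq(2) using gX_eq(1) by simp
  have boundX: "cmod \<mu> \<le> gamma (iter_mat X A)" if "\<mu> \<in> pencil_spectrum KX" for \<mu>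
    unfolding gX_eq(2) using gX_eq(1) that by simp
  have "cmod \<mu> \<le> gamma (iter_mat X A)" if "\<mu> \<in> pencil_spectrum KY" for \<mu>
    using pencil_eigenvalue_comparison[OF B_carrier m Z_mat_B lower_hessenberg_B KX KY e monoX g0 gX]
      boundX that by blast
  then show ?thesis unfolding gY_eq(2) using gY_eq(1) g0 by simp
qed

lemma monotone_splittings:
  "monotone_mat (mask_mat (\<lambda>i j. i = j) B)"
  "monotone_mat (mask_mat (\<lambda>i j. j \<le> i) B)"
  "monotone_mat (mask_mat (\<lambda>i j. i \<le> j) B)"
  "monotone_mat (mask_mat (\<lambda>i j. (i = j \<or> odd i) \<and> i \<le> j + 1 \<and> j \<le> i + 1) B)"
  "monotone_mat (mask_mat (\<lambda>i j. (i = j \<or> even i) \<and> i \<le> j + 1 \<and> j \<le> i + 1) B)"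
proof -
  show "monotone_mat (mask_mat (\<lambda>i j. i = j) B)"
    by (rule monotone_mask_mat[where rk = id]) auto
  show "monotone_mat (mask_mat (\<lambda>i j. j \<le> i) B)"
    by (rule monotone_mask_mat[where rk = id]) auto
  show "monotone_mat (mask_mat (\<lambda>i j. i \<le> j) B)"
    by (rule monotone_mask_mat[where rk = "\<lambda>i. m - i"]) auto
  \<comment> \<open>a stair matrix is triangular once the rows with a single entry are ordered first\<close>
  show "monotone_mat (mask_mat (\<lambda>i j. (i = j \<or> odd i) \<and> i \<le> j + 1 \<and> j \<le> i + 1) B)"
    by (rule monotone_mask_mat[where rk = "\<lambda>i. i mod 2"]) (auto, presburger)
  show "monotone_mat (mask_mat (\<lambda>i j. (i = j \<or> even i) \<and> i \<le> j + 1 \<and> j \<le> i + 1) B)"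
    by (rule monotone_mask_mat[where rk = "\<lambda>i. (i + 1) mod 2"]) (auto, presburger)
qed

lemma gamma_iter_diag_part_lt_1: "gamma (iter_mat diag_part A) < 1"
proof -
  note eq = gamma_iter_mat_eq[where X=diag_part and K="\<lambda>i j. i = j", OF diag_part_eq_mask_mat
      monotone_mat_det_nonzero[OF mask_mat_carrier[OF B_carrier] monotone_splittings(1)]]
  have "cmod \<mu> < 1" if "\<mu> \<in> pencil_spectrum (\<lambda>i j. i = j)" for \<mu>
    using jacobi_pencil_eigenvalue_lt_1[OF A Z colsum irr] that by (simp flip: diag_part_eq_mask_mat)
  then have "Max (insert 0 (cmod ` pencil_spectrum (\<lambda>i j. i = j))) < 1" using eq(1) by simp
  then show ?thesis using eq(2) by simp
qed

lemma gamma_tril_le_diag_part: "gamma (iter_mat tril A) \<le> gamma (iter_mat diag_part A)"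
  by (rule gamma_iter_mat_mono[where X = diag_part and Y = tril and e = "\<lambda>_. 0",
        OF diag_part_eq_mask_mat _ monotone_splittings(1) tril_eq_mask_mat _ monotone_splittings(2) _
        gamma_iter_diag_part_lt_1])
    auto

lemma gamma_tril_lt_1: "gamma (iter_mat tril A) < 1"
  using gamma_tril_le_diag_part gamma_iter_diag_part_lt_1 by simp

lemma gamma_stair_le_tril:
  assumes "S = stair1 \<or> S = stair2"
  shows "gamma (iter_mat S A) \<le> gamma (iter_mat tril A)"
  using assms
proof (elim disjE)
  assume "S = stair1"
  moreover have "gamma (iter_mat stair1 A) \<le> gamma (iter_mat tril A)"
    by (rule gamma_iter_mat_mono[where X = tril and Y = stair1 and e = "\<lambda>j. j div 2",
          OF tril_eq_mask_mat _ monotone_splittings(2) stair1_eq_mask_mat _ monotone_splittings(4) _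
          gamma_tril_lt_1])
      (simp_all add: of_bool_def, presburger)
  ultimately show ?thesis by simp
next
  assume "S = stair2"
  moreover have "gamma (iter_mat stair2 A) \<le> gamma (iter_mat tril A)"
    by (rule gamma_iter_mat_mono[where X = tril and Y = stair2 and e = "\<lambda>j. (j + 1) div 2",
          OF tril_eq_mask_mat _ monotone_splittings(2) stair2_eq_mask_mat _ monotone_splittings(5) _
          gamma_tril_lt_1])
      (simp_all add: of_bool_def, presburger)
  ultimately show ?thesis by simp
qed

lemma gamma_triu_le_stair:
  assumes "S = stair1 \<or> S = stair2"
  shows "gamma (iter_mat triu A) \<le> gamma (iter_mat S A)"
  using assms
proof (elim disjE)
  assume S: "S = stair1"
  have "gamma (iter_mat stair1 A) < 1" using gamma_stair_le_tril gamma_tril_lt_1 by fastforce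
  then have "gamma (iter_mat triu A) \<le> gamma (iter_mat stair1 A)"
    by (intro gamma_iter_mat_mono[where X = stair1 and Y = triu and e = "\<lambda>j. (j + 1) div 2",
          OF stair1_eq_mask_mat _ monotone_splittings(4) triu_eq_mask_mat _ monotone_splittings(3)])
      (simp_all add: of_bool_def, presburger)
  then show ?thesis using S by simp
next
  assume S: "S = stair2"
  have "gamma (iter_mat stair2 A) < 1" using gamma_stair_le_tril gamma_tril_lt_1 by fastforce
  then have "gamma (iter_mat triu A) \<le> gamma (iter_mat stair2 A)"
    by (intro gamma_iter_mat_mono[where X = stair2 and Y = triu and e = "\<lambda>j. j div 2",
          OF stair2_eq_mask_mat _ monotone_splittings(5) triu_eq_mask_mat _ monotone_splittings(3)])
      (simp_all add: of_bool_def, presburger)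
  then show ?thesis using S by simp
qed

end

theorem theorem6:
  fixes n :: nat and A T :: "real mat"
  assumes "n \<ge> 2"
    and "A \<in> carrier_mat n n" and "T \<in> carrier_mat n n"
    and "column_stochastic T" and "A = 1\<^sub>m n - T"
    and "irreducible_mat A" and "M_matrix A" and "det A = 0"
    and "lower_hessenberg A"
    and "S = stair1 \<or> S = stair2"
  shows "gamma (iter_mat diag_part A) \<ge> gamma (iter_mat tril A)
       \<and> gamma (iter_mat tril A) \<ge> gamma (iter_mat S A)
       \<and> gamma (iter_mat S A) \<ge> gamma (iter_mat triu A)"
proof -
  have n: "n = Suc (n - 1)" using \<open>n \<ge> 2\<close> by simp
  have entries: "A $$ (i,j) = of_bool (i = j) - T $$ (i,j)" if "i < n" "j < n" for i j
    using that \<open>A = 1\<^sub>m n - T\<close> \<open>T \<in> carrier_mat n n\<close> by simp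
  interpret hessenberg_M_matrix "n - 1" A
  proof
    show "Z_mat A"
      using entries \<open>column_stochastic T\<close> \<open>A \<in> carrier_mat n n\<close> \<open>T \<in> carrier_mat n n\<close>
      by (auto simp: Z_mat_def column_stochastic_def nonneg_mat_def)
    show "(\<Sum>i<Suc (n - 1). A $$ (i,j)) = 0" if j: "j < Suc (n - 1)" for j
    proof -
      have "(\<Sum>i<n. A $$ (i,j)) = (\<Sum>i<n. of_bool (i = j)) - (\<Sum>i<n. T $$ (i,j))"
        using j entries n by (simp add: sum_subtractf)
      also have "\<dots> = 0"
        using j n \<open>column_stochastic T\<close> \<open>T \<in> carrier_mat n n\<close> by (simp add: column_stochastic_def)
      finally show ?thesis using n by simp
    qed
  qed (use assms n in auto)
  show ?thesis
    using gamma_tril_le_diag_part gamma_stair_le_tril[OF assms(10)] gamma_triu_le_stair[OF assms(10)]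
    by simp
qed

end
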